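(* Let $M$ be a countable transitive model of $\mathrm{ZFU}_R$, let $\mathbb{P} \in M$ be a forcing poset, and let $G$ be an $M$-generic filter over $\mathbb{P}$. Then $M[G] = M[G]_{\#}$, i.e. the generic extension built from the new $\mathbb{P}$-names coincides with the generic extension built from the old $\mathbb{P}$-names in which each urelement is its own name.
   Context: $\mathrm{ZFU}_R$ is ZF with urelements formulated with Replacement: Axiom $\mathcal{A}$ (urelements have no members), Extensionality for sets, Foundation, Pairing, Union, Powerset, Separation, Infinity, and Replacement. Old names: $\tau$ is a $\mathbb{P}$-name$_{\#}$ iff $\tau$ is a urelement or a set of pairs $\langle \sigma, p\rangle$ with $\sigma$ a $\mathbb{P}$-name$_{\#}$ and $p \in \mathbb{P}$; $M^{\mathbb{P}}_{\#}$ is the class of such names in $M$; $\tau_G = \tau$ if $\tau$ is a urelement, and otherwise $\tau_G = \{\sigma_G : \exists p \in G\ \langle \sigma, p\rangle \in \tau\}$; $M[G]_{\#} = \{\tau_G : \tau \in M^{\mathbb{P}}_{\#}\}$. New names: $\dot{x}$ is a $\mathbb{P}$-name iff (i) $\dot{x}$ is a set of pairs $\langle y, p\rangle$ with $p \in \mathbb{P}$ and $y$ either a $\mathbb{P}$-name or a urelement, and (ii) whenever $\langle a, p\rangle, \langle y, q\rangle \in \dot{x}$ with $a$ a urelement and $a \neq y$, $p$ and $q$ are incompatible; $M^{\mathbb{P}}$ is the class of such names in $M$; $\dot{x}_G = a$ if $a$ is a urelement with $\langle a, p\rangle \in \dot{x}$ for some $p \in G$, and otherwise $\dot{x}_G =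 \{\dot{y}_G : \langle \dot{y}, p\rangle \in \dot{x},\ \dot{y} \in M^{\mathbb{P}},\ p \in G\}$; $M[G] = \{\dot{x}_G : \dot{x} \in M^{\mathbb{P}}\}$. *)

theory Defs
  imports "HOL-Library.Countable_Set_Type"
begin

text \<open>A countable transitive model and everything built from it (names, their
 evaluations, M[G]) consist of hereditarily countable objects, so the ambient
 universe is taken to be the hereditarily countable sets over a type 'a of urelements.\<close>

datatype 'a hc = Ur 'a | St "'a hc cset"

definition is_ur :: "'a hc \<Rightarrow> bool" where
  "is_ur x \<longleftrightarrow> (case x of Ur _ \<Rightarrow> True | St _ \<Rightarrow> False)"

definition mem :: "'a hc \<Rightarrow> 'a hc \<Rightarrow> bool" where
  "mem y x \<longleftrightarrow> (case x of Ur _ \<Rightarrow> False | St s \<Rightarrow> cin y s)"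

definition memrel :: "('a hc \<times> 'a hc) set" where
  "memrel = {(y, x). mem y x}"

definition kpair :: "'a hc \<Rightarrow> 'a hc \<Rightarrow> 'a hc" where
  "kpair x y = St (cinsert (St (csingle x)) (csingle (St (cinsert x (csingle y)))))"

definition kfst :: "'a hc \<Rightarrow> 'a hc" where
  "kfst z = (THE x. \<exists>y. z = kpair x y)"

datatype fm = FMem nat nat | FEq nat nat | FUr nat | FNeg fm | FAnd fm fm | FEx fm

fun sat :: "'a hc set \<Rightarrow> (nat \<Rightarrow> 'a hc) \<Rightarrow> fm \<Rightarrow> bool" where
  "sat M env (FMem i j) = mem (env i) (env j)"
| "sat M env (FEq i j) = (env i = env j)"
| "sat M env (FUr i) = is_ur (env i)"
| "sat M env (FNeg \<phi>) = (\<not> sat M env \<phi>)"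
| "sat M env (FAnd \<phi> \<psi>) = (sat M env \<phi> \<and> sat M env \<psi>)"
| "sat M env (FEx \<phi>) = (\<exists>x\<in>M. sat M (case_nat x env) \<phi>)"

definition ctm_ZFU_R :: "'a hc set \<Rightarrow> bool" where
  "ctm_ZFU_R M \<longleftrightarrow>
     countable M \<and>
     (\<forall>x\<in>M. \<forall>y. mem y x \<longrightarrow> y \<in> M) \<and>
     \<comment> \<open>Axiom A: urelements have no members\<close>
     (\<forall>x\<in>M. is_ur x \<longrightarrow> \<not> (\<exists>y\<in>M. mem y x)) \<and>
     \<comment> \<open>Extensionality for sets\<close>
     (\<forall>x\<in>M. \<forall>y\<in>M. \<not> is_ur x \<and> \<not> is_ur y \<and> (\<forall>z\<in>M. mem z x \<longleftrightarrow> mem z y) \<longrightarrow> x = y) \<and>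
     \<comment> \<open>Foundation\<close>
     (\<forall>x\<in>M. (\<exists>y\<in>M. mem y x) \<longrightarrow> (\<exists>y\<in>M. mem y x \<and> \<not> (\<exists>z\<in>M. mem z y \<and> mem z x))) \<and>
     \<comment> \<open>Pairing\<close>
     (\<forall>x\<in>M. \<forall>y\<in>M. \<exists>z\<in>M. mem x z \<and> mem y z) \<and>
     \<comment> \<open>Union\<close>
     (\<forall>x\<in>M. \<exists>u\<in>M. \<forall>y\<in>M. \<forall>z\<in>M. mem z y \<and> mem y x \<longrightarrow> mem z u) \<and>
     \<comment> \<open>Powerset\<close>
     (\<forall>x\<in>M. \<exists>p\<in>M. \<forall>y\<in>M. \<not> is_ur y \<and> (\<forall>z\<in>M. mem z y \<longrightarrow> mem z x) \<longrightarrow> mem y p) \<and>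
     \<comment> \<open>Separation (scheme, with parameters)\<close>
     (\<forall>\<phi> env. \<forall>x\<in>M. (\<forall>n. env n \<in> M) \<longrightarrow>
        (\<exists>y\<in>M. \<not> is_ur y \<and> (\<forall>z\<in>M. mem z y \<longleftrightarrow> mem z x \<and> sat M (case_nat z env) \<phi>))) \<and>
     \<comment> \<open>Infinity\<close>
     (\<exists>x\<in>M. (\<exists>e\<in>M. \<not> is_ur e \<and> (\<forall>z\<in>M. \<not> mem z e) \<and> mem e x) \<and>
        (\<forall>y\<in>M. mem y x \<longrightarrow> (\<exists>s\<in>M. mem s x \<and> \<not> is_ur s \<and> (\<forall>z\<in>M. mem z s \<longleftrightarrow> mem z y \<or> z = y)))) \<and>
     \<comment> \<open>Replacement (scheme, with parameters): variable 0 = u, variable 1 = v\<close>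
     (\<forall>\<phi> env. \<forall>x\<in>M. (\<forall>n. env n \<in> M) \<longrightarrow>
        (\<forall>u\<in>M. mem u x \<longrightarrow> (\<exists>!v. v \<in> M \<and> sat M (case_nat u (case_nat v env)) \<phi>)) \<longrightarrow>
        (\<exists>y\<in>M. \<forall>u\<in>M. mem u x \<longrightarrow> (\<exists>v\<in>M. mem v y \<and> sat M (case_nat u (case_nat v env)) \<phi>)))"

text \<open>A forcing poset (P, leq, one): leq is a set of Kuratowski pairs, (p,q) \<in> leq meaning p \<le> q;
 a preorder on P with largest element one (Kunen's convention).\<close>

definition le :: "'a hc \<Rightarrow> 'a hc \<Rightarrow> 'a hc \<Rightarrow> bool" where
  "le leq p q \<longleftrightarrow> mem (kpair p q) leq"

definition forcing_poset :: "'a hc set \<Rightarrow> 'a hc \<Rightarrow> 'a hc \<Rightarrow> 'a hc \<Rightarrow> bool" where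
  "forcing_poset M P leq one \<longleftrightarrow>
     P \<in> M \<and> leq \<in> M \<and> one \<in> M \<and> \<not> is_ur P \<and> \<not> is_ur leq \<and> mem one P \<and>
     (\<forall>z. mem z leq \<longrightarrow> (\<exists>p q. z = kpair p q \<and> mem p P \<and> mem q P)) \<and>
     (\<forall>p. mem p P \<longrightarrow> le leq p p) \<and>
     (\<forall>p q r. mem p P \<and> mem q P \<and> mem r P \<and> le leq p q \<and> le leq q r \<longrightarrow> le leq p r) \<and>
     (\<forall>p. mem p P \<longrightarrow> le leq p one)"

definition compatible :: "'a hc \<Rightarrow> 'a hc \<Rightarrow> 'a hc \<Rightarrow> 'a hc \<Rightarrow> bool" where
  "compatible P leq p q \<longleftrightarrow> (\<exists>r. mem r P \<and> le leq r p \<and> le leq r q)"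

definition dense :: "'a hc \<Rightarrow> 'a hc \<Rightarrow> 'a hc \<Rightarrow> bool" where
  "dense P leq D \<longleftrightarrow> (\<forall>p. mem p P \<longrightarrow> (\<exists>d. mem d D \<and> le leq d p))"

definition generic_filter :: "'a hc set \<Rightarrow> 'a hc \<Rightarrow> 'a hc \<Rightarrow> 'a hc set \<Rightarrow> bool" where
  "generic_filter M P leq G \<longleftrightarrow>
     (\<forall>p\<in>G. mem p P) \<and> G \<noteq> {} \<and>
     (\<forall>p\<in>G. \<forall>q. mem q P \<and> le leq p q \<longrightarrow> q \<in> G) \<and>
     (\<forall>p\<in>G. \<forall>q\<in>G. \<exists>r\<in>G. le leq r p \<and> le leq r q) \<and>
     (\<forall>D\<in>M. (\<forall>d. mem d D \<longrightarrow> mem d P) \<and> dense P leq D \<longrightarrow> (\<exists>d. mem d D \<and> d \<in> G))"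

inductive old_name :: "'a hc \<Rightarrow> 'a hc \<Rightarrow> bool" for P where
  ur: "is_ur \<tau> \<Longrightarrow> old_name P \<tau>"
| st: "\<not> is_ur \<tau> \<Longrightarrow> (\<forall>z. mem z \<tau> \<longrightarrow> (\<exists>\<sigma> p. z = kpair \<sigma> p \<and> old_name P \<sigma> \<and> mem p P))
       \<Longrightarrow> old_name P \<tau>"

definition val_old :: "'a hc set \<Rightarrow> 'a hc \<Rightarrow> 'a hc" where
  "val_old G = wfrec (memrel\<^sup>+) (\<lambda>f \<tau>. case \<tau> of
      Ur a \<Rightarrow> Ur a
    | St s \<Rightarrow> St (cUnion (cimage (\<lambda>z. if (\<exists>\<sigma> p. z = kpair \<sigma> p \<and> p \<in> G)
                                      then csingle (f (kfst z)) else cempty) s)))"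

definition ext_old :: "'a hc set \<Rightarrow> 'a hc \<Rightarrow> 'a hc set \<Rightarrow> 'a hc set" where
  "ext_old M P G = {val_old G \<tau> | \<tau>. \<tau> \<in> M \<and> old_name P \<tau>}"

inductive new_name :: "'a hc \<Rightarrow> 'a hc \<Rightarrow> 'a hc \<Rightarrow> bool" for P leq where
  "\<not> is_ur x \<Longrightarrow>
   (\<forall>z. mem z x \<longrightarrow> (\<exists>y p. z = kpair y p \<and> mem p P \<and> (new_name P leq y \<or> is_ur y))) \<Longrightarrow>
   (\<forall>a p y q. mem (kpair a p) x \<and> mem (kpair y q) x \<and> is_ur a \<and> a \<noteq> y
        \<longrightarrow> \<not> compatible P leq p q) \<Longrightarrow>
   new_name P leq x"

definition val_new :: "'a hc \<Rightarrow> 'a hc \<Rightarrow> 'a hc set \<Rightarrow> 'a hc \<Rightarrow> 'a hc" where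
  "val_new P leq G = wfrec (memrel\<^sup>+) (\<lambda>f x.
     if (\<exists>a p. is_ur a \<and> p \<in> G \<and> mem (kpair a p) x)
     then (SOME a. is_ur a \<and> (\<exists>p\<in>G. mem (kpair a p) x))
     else (case x of
        Ur a \<Rightarrow> Ur a
      | St s \<Rightarrow> St (cUnion (cimage (\<lambda>z. if (\<exists>y p. z = kpair y p \<and> new_name P leq y \<and> p \<in> G)
                                        then csingle (f (kfst z)) else cempty) s))))"

definition ext_new :: "'a hc set \<Rightarrow> 'a hc \<Rightarrow> 'a hc \<Rightarrow> 'a hc set \<Rightarrow> 'a hc set" where
  "ext_new M P leq G = {val_new P leq G x | x. x \<in> M \<and> new_name P leq x}"

end

theory Submission
  imports Defs
begin

text \<open>Both generic extensions are images of names under evaluation by \<in>-recursion, so it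
  suffices to translate names in both directions inside M without changing their values.
  An old name becomes a new one by replacing each urelement a by {\<langle>a, 1\<rangle>}, recursively;
  as 1 \<in> G the value is unchanged. Conversely, a new name x whose value is a urelement a is
  matched by the old name a itself, which lies in M by transitivity. Otherwise x is replaced by
  the old name consisting of the pairs \<langle>b, r\<rangle> with \<langle>y, q\<rangle> \<in> x, \<langle>b, q'\<rangle> \<in> y, b a urelement and
  r \<le> q, q', together with the pairs \<langle>y', r\<rangle> with \<langle>y, q\<rangle> \<in> x, y' the translation of y, r \<le> q
  and r incompatible with every condition attached to a urelement in y. The two kinds of
  pairs cover the members of x_G that are urelements and sets respectively; that every member
  is covered uses genericity, applied to the dense set of conditions that lie below such a
  condition of y or are incompatible with all of them. Both translations are \<in>-recursions with
  steps definable over M, so the recursion theorem inside M, proved from Separation and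
  Replacement, shows that they map M into M.\<close>

section \<open>Hereditarily countable sets and the evaluation of names\<close>

lemma mem_St [simp]: "mem y (St s) \<longleftrightarrow> cin y s"
  by (simp add: mem_def)

lemma not_mem_Ur [simp]: "\<not> mem y (Ur a)"
  by (simp add: mem_def)

lemma is_ur_simps [simp]: "is_ur (Ur a)" "\<not> is_ur (St s)"
  by (simp_all add: is_ur_def)

lemma not_mem_ur: "is_ur x \<Longrightarrow> \<not> mem y x"
  by (cases x) simp_all

lemma hc_eqI:
  assumes "\<not> is_ur x" "\<not> is_ur y" "\<And>k. mem k x \<longleftrightarrow> mem k y"
  shows "x = y"
  using assms by (cases x; cases y) (auto intro!: cset_eqI)

lemma wf_memrel: "wf memrel"
proof (rule wfUNIVI)
  fix P :: "'a hc \<Rightarrow> bool" and x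
  assume step: "\<forall>x. (\<forall>y. (y, x) \<in> memrel \<longrightarrow> P y) \<longrightarrow> P x"
  show "P x"
    by (induction x) (use step in \<open>auto simp: memrel_def cin.rep_eq\<close>)
qed

lemma wf_memrel_trancl: "wf (memrel\<^sup>+)"
  using wf_memrel by (rule wf_trancl)

lemma mem_memrel_trancl: "mem y x \<Longrightarrow> (y, x) \<in> memrel\<^sup>+"
  by (auto simp: memrel_def)

lemma mem_kpair: "mem y (kpair a b) \<longleftrightarrow> y = St (csingle a) \<or> y = St (cinsert a (csingle b))"
  by (auto simp: kpair_def)

lemma kpair_inject [simp]: "kpair a b = kpair c d \<longleftrightarrow> a = c \<and> b = d"
  unfolding kpair_def by (auto simp: cdoubleton_eq_iff)

lemma kpair_not_ur [simp]: "\<not> is_ur (kpair a b)"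
  by (simp add: kpair_def)

lemma kfst_kpair [simp]: "kfst (kpair a b) = a"
  by (simp add: kfst_def)

lemma kpair_fst_memrel_trancl: "mem (kpair a b) x \<Longrightarrow> (a, x) \<in> memrel\<^sup>+"
proof -
  assume "mem (kpair a b) x"
  then have "(St (csingle a), x) \<in> memrel\<^sup>+"
    by (meson mem_kpair mem_memrel_trancl trancl_trans)
  moreover have "(a, St (csingle a)) \<in> memrel\<^sup>+"
    by (simp add: mem_memrel_trancl)
  ultimately show ?thesis
    by simp
qed

definition in_dom :: "'a hc \<Rightarrow> 'a hc \<Rightarrow> bool" where
  "in_dom z x \<longleftrightarrow> (\<exists>p. mem (kpair z p) x)"

lemma in_dom_memrel_trancl: "in_dom z x \<Longrightarrow> (z, x) \<in> memrel\<^sup>+"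
  unfolding in_dom_def using kpair_fst_memrel_trancl by blast

lemma countable_members: "countable {y. mem y x}"
  by (cases x) (simp_all add: cin.rep_eq)

lemma countable_in_dom: "countable {z. in_dom z x}"
proof (rule countable_subset)
  show "{z. in_dom z x} \<subseteq> (\<Union>y\<in>{y. mem y x}. \<Union>w\<in>{w. mem w y}. {z. mem z w})"
  proof
    fix z assume "z \<in> {z. in_dom z x}"
    then obtain p where "mem (kpair z p) x"
      by (auto simp: in_dom_def)
    moreover have "mem (St (csingle z)) (kpair z p)"
      by (simp add: mem_kpair)
    ultimately show "z \<in> (\<Union>y\<in>{y. mem y x}. \<Union>w\<in>{w. mem w y}. {z. mem z w})"
      by force
  qed
  show "countable (\<Union>y\<in>{y. mem y x}. \<Union>w\<in>{w. mem w y}. {z. mem z w})"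
    by (intro countable_UN countable_members)
qed

definition hset :: "'a hc set \<Rightarrow> 'a hc" where
  "hset S = St (acset S)"

lemma mem_hset: "countable S \<Longrightarrow> mem k (hset S) \<longleftrightarrow> k \<in> S"
  by (simp add: hset_def cin.rep_eq)

lemma hset_not_ur [simp]: "\<not> is_ur (hset S)"
  by (simp add: hset_def)

lemma wfrec_memrel_trancl_unfold:
  assumes "\<And>f g x. (\<And>y. (y, x) \<in> memrel\<^sup>+ \<Longrightarrow> f y = g y) \<Longrightarrow> F f x = F g x"
  shows "wfrec (memrel\<^sup>+) F x = F (wfrec (memrel\<^sup>+) F) x"
  using wfrec_fixpoint[OF wf_memrel_trancl, of F] assms unfolding adm_wf_def by metis

lemma selected_image_cong:
  assumes "\<And>y. (y, St s) \<in> memrel\<^sup>+ \<Longrightarrow> f y = g y"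
  shows "cimage (\<lambda>z. if \<exists>\<sigma> p. z = kpair \<sigma> p \<and> R \<sigma> p then csingle (f (kfst z)) else cempty) s =
         cimage (\<lambda>z. if \<exists>\<sigma> p. z = kpair \<sigma> p \<and> R \<sigma> p then csingle (g (kfst z)) else cempty) s"
  using assms kpair_fst_memrel_trancl[of _ _ "St s"] by (intro cimage_cong) auto

lemma mem_selected_image:
  "cin k (cUnion (cimage (\<lambda>z. if \<exists>\<sigma> p. z = kpair \<sigma> p \<and> R \<sigma> p then csingle (f (kfst z)) else cempty) s))
     \<longleftrightarrow> (\<exists>\<sigma> p. cin (kpair \<sigma> p) s \<and> R \<sigma> p \<and> k = f \<sigma>)"
  (is "?L \<longleftrightarrow> ?R")
proof
  assume ?L
  then show ?R
    by (auto simp del: cUN_iff split: if_splits) blast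
next
  assume ?R
  then obtain \<sigma> p where "cin (kpair \<sigma> p) s" "R \<sigma> p" "k = f \<sigma>"
    by blast
  then show ?L
    by (auto simp del: cUN_iff intro!: cUN_I[of "kpair \<sigma> p"])
qed

lemma val_old_eq:
  "val_old G \<tau> = (case \<tau> of Ur a \<Rightarrow> Ur a
     | St s \<Rightarrow> St (cUnion (cimage (\<lambda>z. if \<exists>\<sigma> p. z = kpair \<sigma> p \<and> p \<in> G
                                     then csingle (val_old G (kfst z)) else cempty) s)))"
  unfolding val_old_def
  by (rule wfrec_memrel_trancl_unfold) (auto split: hc.split intro!: arg_cong[where f=cUnion] selected_image_cong)

lemma val_old_ur: "is_ur \<tau> \<Longrightarrow> val_old G \<tau> = \<tau>"
  by (cases \<tau>) (simp_all add: val_old_eq)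

lemma val_old_not_ur: "\<not> is_ur \<tau> \<Longrightarrow> \<not> is_ur (val_old G \<tau>)"
  by (cases \<tau>) (simp_all add: val_old_eq)

lemma mem_val_old:
  assumes "\<not> is_ur \<tau>"
  shows "mem k (val_old G \<tau>) \<longleftrightarrow> (\<exists>\<sigma> p. mem (kpair \<sigma> p) \<tau> \<and> p \<in> G \<and> k = val_old G \<sigma>)"
proof -
  obtain s where "\<tau> = St s"
    using assms by (cases \<tau>) simp_all
  then show ?thesis
    by (subst val_old_eq) (simp only: hc.case mem_St, rule mem_selected_image)
qed

definition ur_valued :: "'a hc set \<Rightarrow> 'a hc \<Rightarrow> bool" where
  "ur_valued G x \<longleftrightarrow> (\<exists>a p. is_ur a \<and> p \<in> G \<and> mem (kpair a p) x)"

lemma val_new_eq: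
  "val_new P leq G x = (if ur_valued G x then (SOME a. is_ur a \<and> (\<exists>p\<in>G. mem (kpair a p) x))
     else (case x of Ur a \<Rightarrow> Ur a
       | St s \<Rightarrow> St (cUnion (cimage (\<lambda>z. if \<exists>y p. z = kpair y p \<and> new_name P leq y \<and> p \<in> G
                                       then csingle (val_new P leq G (kfst z)) else cempty) s))))"
  unfolding val_new_def ur_valued_def
  by (rule wfrec_memrel_trancl_unfold)
    (auto split: hc.split intro!: arg_cong[where f=cUnion] selected_image_cong[where R="\<lambda>y p. new_name P leq y \<and> p \<in> G", simplified])

lemma val_new_ur_valued:
  "ur_valued G x \<Longrightarrow> val_new P leq G x = (SOME a. is_ur a \<and> (\<exists>p\<in>G. mem (kpair a p) x))"
  by (subst val_new_eq) simp

lemma val_new_not_ur: "\<not> is_ur x \<Longrightarrow> \<not> ur_valued G x \<Longrightarrow> \<not> is_ur (val_new P leq G x)"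
  by (cases x) (simp_all add: val_new_eq)

lemma mem_val_new:
  assumes "\<not> is_ur x" "\<not> ur_valued G x"
  shows "mem k (val_new P leq G x) \<longleftrightarrow>
    (\<exists>y p. mem (kpair y p) x \<and> new_name P leq y \<and> p \<in> G \<and> k = val_new P leq G y)"
proof -
  obtain s where "x = St s"
    using assms(1) by (cases x) simp_all
  with assms(2) show ?thesis
    by (subst val_new_eq) (simp only: if_False hc.case mem_St, subst mem_selected_image, simp only: conj_assoc)
qed

lemma new_name_not_ur: "new_name P leq x \<Longrightarrow> \<not> is_ur x"
  by (erule new_name.cases) simp

lemma new_name_entry:
  "new_name P leq x \<Longrightarrow> mem (kpair y q) x \<Longrightarrow> mem q P \<and> (\<not> is_ur y \<longrightarrow> new_name P leq y)"
  by (erule new_name.cases) auto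

section \<open>Definability over M\<close>

text \<open>A predicate Q on environments is definable over M if some formula defines it with
  parameters from M; in the formula, variable 2n stands for the environment's n-th value
  and variable 2n+1 for the n-th parameter.\<close>

definition interleave :: "(nat \<Rightarrow> 'b) \<Rightarrow> (nat \<Rightarrow> 'b) \<Rightarrow> nat \<Rightarrow> 'b" where
  "interleave e p n = (if even n then e (n div 2) else p (n div 2))"

definition definable :: "'a hc set \<Rightarrow> ((nat \<Rightarrow> 'a hc) \<Rightarrow> bool) \<Rightarrow> bool" where
  "definable M Q \<longleftrightarrow> (\<exists>\<phi> p. (\<forall>n. p n \<in> M) \<and>
     (\<forall>e. (\<forall>n. e n \<in> M) \<longrightarrow> (sat M (interleave e p) \<phi> \<longleftrightarrow> Q e)))"

fun rename_fm :: "(nat \<Rightarrow> nat) \<Rightarrow> fm \<Rightarrow> fm" where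
  "rename_fm f (FMem i j) = FMem (f i) (f j)"
| "rename_fm f (FEq i j) = FEq (f i) (f j)"
| "rename_fm f (FUr i) = FUr (f i)"
| "rename_fm f (FNeg \<phi>) = FNeg (rename_fm f \<phi>)"
| "rename_fm f (FAnd \<phi> \<psi>) = FAnd (rename_fm f \<phi>) (rename_fm f \<psi>)"
| "rename_fm f (FEx \<phi>) = FEx (rename_fm (case_nat 0 (\<lambda>n. Suc (f n))) \<phi>)"

lemma sat_rename_fm: "sat M env (rename_fm f \<phi>) = sat M (env \<circ> f) \<phi>"
proof (induction \<phi> arbitrary: f env)
  case (FEx \<phi>)
  have "case_nat x env \<circ> case_nat 0 (\<lambda>n. Suc (f n)) = case_nat x (env \<circ> f)" for x
    by (rule ext) (simp split: nat.split)
  then show ?case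
    by (simp only: rename_fm.simps sat.simps FEx.IH)
qed simp_all

lemma sat_rename_fm_cong: "env \<circ> f = env' \<Longrightarrow> sat M env (rename_fm f \<phi>) = sat M env' \<phi>"
  by (simp add: sat_rename_fm)

lemma definableI:
  "(\<forall>n. p n \<in> M) \<Longrightarrow> (\<And>e. (\<forall>n. e n \<in> M) \<Longrightarrow> sat M (interleave e p) \<phi> \<longleftrightarrow> Q e) \<Longrightarrow> definable M Q"
  unfolding definable_def by blast

lemma definable_cong: "definable M Q \<Longrightarrow> (\<And>e. (\<forall>n. e n \<in> M) \<Longrightarrow> Q e = Q' e) \<Longrightarrow> definable M Q'"
  unfolding definable_def by metis

lemma definable_not: "definable M Q \<Longrightarrow> definable M (\<lambda>e. \<not> Q e)"
  unfolding definable_def by (metis sat.simps(4))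

lemma definable_conj:
  assumes "definable M Q1" "definable M Q2"
  shows "definable M (\<lambda>e. Q1 e \<and> Q2 e)"
proof -
  obtain \<phi>1 p1 where 1: "\<forall>n. p1 n \<in> M" "\<And>e. (\<forall>n. e n \<in> M) \<Longrightarrow> sat M (interleave e p1) \<phi>1 \<longleftrightarrow> Q1 e"
    using assms(1) unfolding definable_def by blast
  obtain \<phi>2 p2 where 2: "\<forall>n. p2 n \<in> M" "\<And>e. (\<forall>n. e n \<in> M) \<Longrightarrow> sat M (interleave e p2) \<phi>2 \<longleftrightarrow> Q2 e"
    using assms(2) unfolding definable_def by blast
  \<comment> \<open>the parameters of the two formulas occupy the even and odd slots of \<open>interleave p1 p2\<close>\<close>
  define f1 where "f1 n = (if even n then n else 2 * (2 * (n div 2)) + 1)" for n :: nat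
  define f2 where "f2 n = (if even n then n else 2 * (2 * (n div 2) + 1) + 1)" for n :: nat
  have "interleave e (interleave p1 p2) \<circ> f1 = interleave e p1" for e
    by (rule ext) (auto simp: f1_def interleave_def elim!: oddE)
  moreover have "interleave e (interleave p1 p2) \<circ> f2 = interleave e p2" for e
    by (rule ext) (auto simp: f2_def interleave_def elim!: oddE)
  ultimately show ?thesis
    using 1 2
    by (intro definableI[where p="interleave p1 p2" and \<phi>="FAnd (rename_fm f1 \<phi>1) (rename_fm f2 \<phi>2)"])
      (simp_all add: interleave_def sat_rename_fm_cong)
qed

lemma definable_bex:
  assumes "definable M (\<lambda>e. Q (e 0) (\<lambda>n. e (Suc n)))"
  shows "definable M (\<lambda>e. \<exists>x\<in>M. Q x e)"
proof -
  obtain \<phi> p where p: "\<forall>n. p n \<in> M"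
    and \<phi>: "\<And>e. (\<forall>n. e n \<in> M) \<Longrightarrow> sat M (interleave e p) \<phi> \<longleftrightarrow> Q (e 0) (\<lambda>n. e (Suc n))"
    using assms unfolding definable_def by blast
  define f where "f n = (if even n then (if n = 0 then 0 else Suc (n - 2)) else Suc n)" for n :: nat
  have shift: "case_nat x (interleave e p) \<circ> f = interleave (case_nat x e) p" for x e
    by (rule ext) (auto simp: f_def interleave_def split: nat.split elim!: evenE)
  show ?thesis
  proof (rule definableI[OF p])
    fix e :: "nat \<Rightarrow> 'a hc"
    assume "\<forall>n. e n \<in> M"
    then show "sat M (interleave e p) (FEx (rename_fm f \<phi>)) \<longleftrightarrow> (\<exists>x\<in>M. Q x e)"
      by (simp add: sat_rename_fm_cong[OF shift] \<phi> split: nat.split)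
  qed
qed

lemma definable_disj: "definable M Q1 \<Longrightarrow> definable M Q2 \<Longrightarrow> definable M (\<lambda>e. Q1 e \<or> Q2 e)"
  using definable_not[OF definable_conj[OF definable_not definable_not]] by simp

lemma definable_imp: "definable M Q1 \<Longrightarrow> definable M Q2 \<Longrightarrow> definable M (\<lambda>e. Q1 e \<longrightarrow> Q2 e)"
  using definable_disj[OF definable_not] by simp

lemma definable_iff: "definable M Q1 \<Longrightarrow> definable M Q2 \<Longrightarrow> definable M (\<lambda>e. Q1 e \<longleftrightarrow> Q2 e)"
  using definable_conj[OF definable_imp definable_imp] by (simp add: iff_conv_conj_imp)

lemma definable_ball:
  "definable M (\<lambda>e. Q (e 0) (\<lambda>n. e (Suc n))) \<Longrightarrow> definable M (\<lambda>e. \<forall>x\<in>M. Q x e)"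
  using definable_not[OF definable_bex[OF definable_not]] by simp

lemma definable_rename:
  assumes "definable M Q"
  shows "definable M (\<lambda>e. Q (e \<circ> f))"
proof -
  obtain \<phi> p where p: "\<forall>n. p n \<in> M"
    and \<phi>: "\<And>e. (\<forall>n. e n \<in> M) \<Longrightarrow> sat M (interleave e p) \<phi> \<longleftrightarrow> Q e"
    using assms unfolding definable_def by blast
  define g where "g n = (if even n then 2 * f (n div 2) else n)" for n
  have rename: "interleave e p \<circ> g = interleave (e \<circ> f) p" for e
    by (rule ext) (auto simp: g_def interleave_def)
  show ?thesis
  proof (rule definableI[OF p])
    fix e :: "nat \<Rightarrow> 'a hc"
    assume "\<forall>n. e n \<in> M"
    then show "sat M (interleave e p) (rename_fm g \<phi>) \<longleftrightarrow> Q (e \<circ> f)"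
      by (simp add: sat_rename_fm_cong[OF rename] \<phi>)
  qed
qed

lemma definable_rename3:
  "definable M (\<lambda>e. R (e 0) (e 1) (e 2)) \<Longrightarrow> definable M (\<lambda>e. R (e i) (e j) (e k))"
  by (drule definable_rename[where f="\<lambda>n. if n = 0 then i else if n = 1 then j else k"]) simp

lemma definable_subst:
  assumes "definable M Q" "c \<in> M"
  shows "definable M (\<lambda>e. Q (case_nat c e))"
proof -
  obtain \<phi> p where "\<forall>n. p n \<in> M" "\<And>e. (\<forall>n. e n \<in> M) \<Longrightarrow> sat M (interleave e p) \<phi> \<longleftrightarrow> Q e"
    using assms(1) unfolding definable_def by blast
  moreover have "interleave e (case_nat c p) \<circ> (\<lambda>n. if n = 0 then 1 else if even n then n - 2 else n + 2)
      = interleave (case_nat c e) p" for e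
    by (rule ext) (auto simp: interleave_def split: nat.split elim!: evenE oddE)
  ultimately show ?thesis
    using assms(2)
    by (intro definableI[where p="case_nat c p"
          and \<phi>="rename_fm (\<lambda>n. if n = 0 then 1 else if even n then n - 2 else n + 2) \<phi>"])
      (auto simp: sat_rename_fm_cong split: nat.split)
qed

lemma definable_params:
  "definable M Q \<Longrightarrow> set cs \<subseteq> M \<Longrightarrow>
    definable M (\<lambda>e. Q (\<lambda>n. if n < length cs then cs ! n else e (n - length cs)))"
proof (induction cs arbitrary: Q)
  case (Cons c cs)
  then have "definable M (\<lambda>e. Q (case_nat c (\<lambda>n. if n < length cs then cs ! n else e (n - length cs))))"
    using definable_subst by auto
  moreover have "case_nat c (\<lambda>n. if n < length cs then cs ! n else e (n - length cs)) =
      (\<lambda>n. if n < length (c # cs) then (c # cs) ! n else e (n - length (c # cs)))" for e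
    by (rule ext) (simp split: nat.split)
  ultimately show ?case
    by simp
qed simp

locale inhabited =
  fixes M :: "'a hc set"
  assumes inhabited: "M \<noteq> {}"
begin

lemma definable_atomic:
  "(\<And>e. sat M (interleave e (\<lambda>_. SOME m. m \<in> M)) \<phi> \<longleftrightarrow> Q e) \<Longrightarrow> definable M Q"
  using inhabited by (intro definableI[where p="\<lambda>_. SOME m. m \<in> M"]) (simp_all add: some_in_eq)

lemma definable_mem: "definable M (\<lambda>e. mem (e i) (e j))"
  by (rule definable_atomic[where \<phi>="FMem (2 * i) (2 * j)"]) (simp add: interleave_def)

lemma definable_eq: "definable M (\<lambda>e. e i = e j)"
  by (rule definable_atomic[where \<phi>="FEq (2 * i) (2 * j)"]) (simp add: interleave_def)

lemma definable_is_ur: "definable M (\<lambda>e. is_ur (e i))"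
  by (rule definable_atomic[where \<phi>="FUr (2 * i)"]) (simp add: interleave_def)

end

locale ctm =
  fixes M :: "'a hc set"
  assumes ctm: "ctm_ZFU_R M"
begin

lemma transitive: "x \<in> M \<Longrightarrow> mem y x \<Longrightarrow> y \<in> M"
  using ctm unfolding ctm_ZFU_R_def by (elim conjE) blast

sublocale inhabited M
  using ctm unfolding ctm_ZFU_R_def by unfold_locales (elim conjE, blast)

lemma separation:
  assumes "x \<in> M" "definable M (\<lambda>e. Q (e 0))"
  shows "\<exists>y\<in>M. \<not> is_ur y \<and> (\<forall>z. mem z y \<longleftrightarrow> mem z x \<and> Q z)"
proof -
  obtain \<phi> p where p: "\<forall>n. p n \<in> M"
    and \<phi>: "\<And>e. (\<forall>n. e n \<in> M) \<Longrightarrow> sat M (interleave e p) \<phi> \<longleftrightarrow> Q (e 0)"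
    using assms(2) unfolding definable_def by blast
  define g where "g n = (if even n then 0 else Suc (n div 2))" for n :: nat
  have "case_nat z p \<circ> g = interleave (\<lambda>_. z) p" for z
    by (rule ext) (auto simp: g_def interleave_def)
  then have Q: "sat M (case_nat z p) (rename_fm g \<phi>) \<longleftrightarrow> Q z" if "z \<in> M" for z
    using \<phi>[of "\<lambda>_. z"] that by (simp add: sat_rename_fm_cong)
  have "\<forall>\<phi> env. \<forall>x\<in>M. (\<forall>n. env n \<in> M) \<longrightarrow>
      (\<exists>y\<in>M. \<not> is_ur y \<and> (\<forall>z\<in>M. mem z y \<longleftrightarrow> mem z x \<and> sat M (case_nat z env) \<phi>))"
    using ctm unfolding ctm_ZFU_R_def by (elim conjE) assumption
  then obtain y where "y \<in> M" "\<not> is_ur y" "\<forall>z\<in>M. mem z y \<longleftrightarrow> mem z x \<and> sat M (case_nat z p) (rename_fm g \<phi>)"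
    using assms(1) p by blast
  then show ?thesis
    using Q transitive assms(1) by metis
qed

lemma separation_subset:
  assumes "w \<in> M" "\<And>k. Q k \<Longrightarrow> mem k w" "definable M (\<lambda>e. Q (e 0))"
  shows "\<exists>y\<in>M. \<not> is_ur y \<and> (\<forall>k. mem k y \<longleftrightarrow> Q k)"
  using separation[OF assms(1,3)] assms(2) by blast

lemma replacement:
  assumes "definable M (\<lambda>e. R (e 0) (e 1))" "x \<in> M" "\<And>u. mem u x \<Longrightarrow> \<exists>!v. v \<in> M \<and> R u v"
  shows "\<exists>y\<in>M. \<forall>u. mem u x \<longrightarrow> (\<exists>v. mem v y \<and> R u v)"
proof -
  obtain \<phi> p where p: "\<forall>n. p n \<in> M"
    and \<phi>: "\<And>e. (\<forall>n. e n \<in> M) \<Longrightarrow> sat M (interleave e p) \<phi> \<longleftrightarrow> R (e 0) (e 1)"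
    using assms(1) unfolding definable_def by blast
  define g where "g n = (if even n then (if n = 0 then 0 else 1) else Suc (Suc (n div 2)))" for n :: nat
  have "case_nat u (case_nat v p) \<circ> g = interleave (\<lambda>n. if n = 0 then u else v) p" for u v
    by (rule ext) (auto simp: g_def interleave_def)
  then have sat_iff: "sat M (case_nat u (case_nat v p)) (rename_fm g \<phi>) \<longleftrightarrow> R u v" if "u \<in> M" "v \<in> M" for u v
    using \<phi>[of "\<lambda>n. if n = 0 then u else v"] that by (simp add: sat_rename_fm_cong)
  have replacement_ax: "\<forall>\<phi> env. \<forall>x\<in>M. (\<forall>n. env n \<in> M) \<longrightarrow>
      (\<forall>u\<in>M. mem u x \<longrightarrow> (\<exists>!v. v \<in> M \<and> sat M (case_nat u (case_nat v env)) \<phi>)) \<longrightarrow>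
      (\<exists>y\<in>M. \<forall>u\<in>M. mem u x \<longrightarrow> (\<exists>v\<in>M. mem v y \<and> sat M (case_nat u (case_nat v env)) \<phi>))"
    using ctm unfolding ctm_ZFU_R_def by (elim conjE) assumption
  have functional: "\<exists>!v. v \<in> M \<and> sat M (case_nat u (case_nat v p)) (rename_fm g \<phi>)"
    if u: "u \<in> M" "mem u x" for u
  proof -
    obtain v where v: "v \<in> M \<and> R u v" and unique: "\<forall>v'. v' \<in> M \<and> R u v' \<longrightarrow> v' = v"
      using assms(3)[OF u(2)] by (rule ex1E)
    show ?thesis
    proof (rule ex1I[of _ v])
      show "v \<in> M \<and> sat M (case_nat u (case_nat v p)) (rename_fm g \<phi>)"
        using v sat_iff u(1) by blast
      fix v' assume "v' \<in> M \<and> sat M (case_nat u (case_nat v' p)) (rename_fm g \<phi>)"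
      then show "v' = v"
        using unique sat_iff u(1) by blast
    qed
  qed
  from replacement_ax[rule_format, OF assms(2) p[rule_format] functional] obtain y where "y \<in> M"
    "\<forall>u\<in>M. mem u x \<longrightarrow> (\<exists>v\<in>M. mem v y \<and> sat M (case_nat u (case_nat v p)) (rename_fm g \<phi>))"
    by blast
  then show ?thesis
    using sat_iff transitive assms(2) by metis
qed

lemma pairing: "a \<in> M \<Longrightarrow> b \<in> M \<Longrightarrow> \<exists>w\<in>M. mem a w \<and> mem b w"
  using ctm unfolding ctm_ZFU_R_def by (elim conjE) blast

lemma union_bound:
  assumes "x \<in> M"
  shows "\<exists>u\<in>M. \<forall>y z. mem y x \<longrightarrow> mem z y \<longrightarrow> mem z u"
proof -
  have "\<forall>x\<in>M. \<exists>u\<in>M. \<forall>y\<in>M. \<forall>z\<in>M. mem z y \<and> mem y x \<longrightarrow> mem z u"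
    using ctm unfolding ctm_ZFU_R_def by (elim conjE) assumption
  then obtain u where "u \<in> M" "\<forall>y\<in>M. \<forall>z\<in>M. mem z y \<and> mem y x \<longrightarrow> mem z u"
    using assms by blast
  then show ?thesis
    using assms transitive by blast
qed

lemma powerset_bound:
  assumes "x \<in> M"
  shows "\<exists>p\<in>M. \<forall>y\<in>M. \<not> is_ur y \<and> (\<forall>z. mem z y \<longrightarrow> mem z x) \<longrightarrow> mem y p"
proof -
  have "\<forall>x\<in>M. \<exists>p\<in>M. \<forall>y\<in>M. \<not> is_ur y \<and> (\<forall>z\<in>M. mem z y \<longrightarrow> mem z x) \<longrightarrow> mem y p"
    using ctm unfolding ctm_ZFU_R_def by (elim conjE) assumption
  with assms show ?thesis
    by blast
qed

lemma upair_in_M: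
  assumes "a \<in> M" "b \<in> M"
  shows "St (cinsert a (csingle b)) \<in> M"
proof -
  obtain w where w: "w \<in> M" "mem a w" "mem b w"
    using pairing assms by blast
  have "definable M (\<lambda>e. e 2 = e 0 \<or> e 2 = e 1)"
    by (intro definable_disj definable_eq)
  from definable_params[OF this, where cs="[a, b]"] assms
  have "definable M (\<lambda>e. e 0 = a \<or> e 0 = b)"
    by simp
  then obtain y where "y \<in> M" "\<not> is_ur y" "\<forall>k. mem k y \<longleftrightarrow> k = a \<or> k = b"
    using separation_subset[OF w(1), of "\<lambda>k. k = a \<or> k = b"] w by blast
  moreover from this have "y = St (cinsert a (csingle b))"
    by (intro hc_eqI) auto
  ultimately show ?thesis
    by simp
qed

lemma singleton_in_M: "a \<in> M \<Longrightarrow> St (csingle a) \<in> M"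
  using upair_in_M[of a a] by (simp add: cinsert_absorb)

lemma kpair_in_M: "a \<in> M \<Longrightarrow> b \<in> M \<Longrightarrow> kpair a b \<in> M"
  unfolding kpair_def by (intro upair_in_M singleton_in_M)

lemma mem_kpair_in_M:
  assumes "x \<in> M" "mem (kpair a b) x"
  shows "a \<in> M" "b \<in> M"
proof -
  have "kpair a b \<in> M"
    using assms transitive by blast
  then have "St (csingle a) \<in> M" "St (cinsert a (csingle b)) \<in> M"
    using transitive by (simp_all add: mem_kpair)
  then show "a \<in> M" "b \<in> M"
    using transitive[of "St (csingle a)" a] transitive[of "St (cinsert a (csingle b))" b] by simp_all
qed

lemma upair_iff:
  assumes "z \<in> M" "a \<in> M" "b \<in> M"
  shows "(\<not> is_ur z \<and> (\<forall>w\<in>M. mem w z \<longleftrightarrow> w = a \<or> w = b)) \<longleftrightarrow> z = St (cinsert a (csingle b))"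
proof
  assume z: "\<not> is_ur z \<and> (\<forall>w\<in>M. mem w z \<longleftrightarrow> w = a \<or> w = b)"
  show "z = St (cinsert a (csingle b))"
  proof (rule hc_eqI)
    fix k
    show "mem k z \<longleftrightarrow> mem k (St (cinsert a (csingle b)))"
      using z assms transitive[OF assms(1), of k] by auto
  qed (use z in simp_all)
qed simp

lemma definable_eq_kpair: "definable M (\<lambda>e. e k = kpair (e i) (e j))"
proof -
  let ?U = "\<lambda>z a b. \<not> is_ur z \<and> (\<forall>w\<in>M. mem w z \<longleftrightarrow> w = a \<or> w = b)"
  have "definable M (\<lambda>e. \<exists>s1\<in>M. \<exists>s2\<in>M. ?U s1 (e i) (e i) \<and> ?U s2 (e i) (e j) \<and> ?U (e k) s1 s2)"
    by (intro definable_bex definable_conj definable_not definable_ball definable_iff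
        definable_disj definable_mem definable_eq definable_is_ur)
  then show ?thesis
  proof (rule definable_cong)
    fix e :: "nat \<Rightarrow> 'a hc"
    assume e: "\<forall>n. e n \<in> M"
    show "(\<exists>s1\<in>M. \<exists>s2\<in>M. ?U s1 (e i) (e i) \<and> ?U s2 (e i) (e j) \<and> ?U (e k) s1 s2)
        \<longleftrightarrow> e k = kpair (e i) (e j)"
    proof
      assume "\<exists>s1\<in>M. \<exists>s2\<in>M. ?U s1 (e i) (e i) \<and> ?U s2 (e i) (e j) \<and> ?U (e k) s1 s2"
      then obtain s1 s2 where "s1 \<in> M" "s2 \<in> M" "?U s1 (e i) (e i)" "?U s2 (e i) (e j)" "?U (e k) s1 s2"
        by blast
      with e have "s1 = St (cinsert (e i) (csingle (e i)))" "s2 = St (cinsert (e i) (csingle (e j)))"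
        "e k = St (cinsert s1 (csingle s2))"
        by (simp_all only: upair_iff)
      then show "e k = kpair (e i) (e j)"
        by (simp add: kpair_def cinsert_absorb)
    next
      assume k: "e k = kpair (e i) (e j)"
      show "\<exists>s1\<in>M. \<exists>s2\<in>M. ?U s1 (e i) (e i) \<and> ?U s2 (e i) (e j) \<and> ?U (e k) s1 s2"
      proof (rule bexI[where x="St (csingle (e i))"], rule bexI[where x="St (cinsert (e i) (csingle (e j)))"])
      qed (use k e in \<open>auto simp: kpair_def intro: singleton_in_M upair_in_M\<close>)
    qed
  qed
qed

lemma definable_mem_kpair: "definable M (\<lambda>e. mem (kpair (e i) (e j)) (e k))"
proof -
  have "definable M (\<lambda>e. \<exists>x\<in>M. x = kpair (e i) (e j) \<and> mem x (e k))"
    by (intro definable_bex definable_conj definable_eq_kpair definable_mem)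
  then show ?thesis
  proof (rule definable_cong)
    fix e :: "nat \<Rightarrow> 'a hc"
    assume "\<forall>n. e n \<in> M"
    then have "kpair (e i) (e j) \<in> M"
      by (simp add: kpair_in_M)
    then show "(\<exists>x\<in>M. x = kpair (e i) (e j) \<and> mem x (e k)) \<longleftrightarrow> mem (kpair (e i) (e j)) (e k)"
      by blast
  qed
qed

lemmas definable_intros =
  definable_conj definable_disj definable_imp definable_iff definable_not definable_bex definable_ball
  definable_mem definable_eq definable_is_ur definable_eq_kpair definable_mem_kpair

lemma definable_in_dom: "definable M (\<lambda>e. in_dom (e i) (e j))"
proof -
  have "definable M (\<lambda>e. \<exists>p\<in>M. mem (kpair (e i) p) (e j))"
    by (intro definable_intros)
  then show ?thesis
    by (rule definable_cong) (auto simp: in_dom_def dest: mem_kpair_in_M)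
qed

lemma union2_bound: "a \<in> M \<Longrightarrow> b \<in> M \<Longrightarrow> \<exists>w\<in>M. \<forall>k. mem k a \<or> mem k b \<longrightarrow> mem k w"
proof -
  assume "a \<in> M" "b \<in> M"
  then obtain p where p: "p \<in> M" "mem a p" "mem b p"
    using pairing by blast
  then obtain u where "u \<in> M" "\<forall>y z. mem y p \<longrightarrow> mem z y \<longrightarrow> mem z u"
    using union_bound by blast
  with p show ?thesis
    by blast
qed

lemma kpairs_bound: "W \<in> M \<Longrightarrow> \<exists>C\<in>M. \<forall>a b. mem a W \<longrightarrow> mem b W \<longrightarrow> mem (kpair a b) C"
proof -
  assume W: "W \<in> M"
  obtain P1 where P1: "P1 \<in> M" "\<forall>y\<in>M. \<not> is_ur y \<and> (\<forall>z. mem z y \<longrightarrow> mem z W) \<longrightarrow> mem y P1"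
    using powerset_bound W by blast
  obtain P2 where P2: "P2 \<in> M" "\<forall>y\<in>M. \<not> is_ur y \<and> (\<forall>z. mem z y \<longrightarrow> mem z P1) \<longrightarrow> mem y P2"
    using powerset_bound P1(1) by blast
  have "mem (kpair a b) P2" if "mem a W" "mem b W" for a b
  proof -
    have ab: "a \<in> M" "b \<in> M"
      using that W transitive by blast+
    have "mem (St (csingle a)) P1" "mem (St (cinsert a (csingle b))) P1"
      using P1(2) singleton_in_M[OF ab(1)] upair_in_M[OF ab] that by auto
    then show ?thesis
      using P2(2) kpair_in_M[OF ab] by (auto simp: kpair_def)
  qed
  with P2(1) show ?thesis
    by blast
qed

lemma kpair_components_bound: "x \<in> M \<Longrightarrow> \<exists>u\<in>M. \<forall>a b. mem (kpair a b) x \<longrightarrow> mem a u \<and> mem b u"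
proof -
  assume "x \<in> M"
  then obtain u1 where u1: "u1 \<in> M" "\<forall>y z. mem y x \<longrightarrow> mem z y \<longrightarrow> mem z u1"
    using union_bound by blast
  then obtain u2 where u2: "u2 \<in> M" "\<forall>y z. mem y u1 \<longrightarrow> mem z y \<longrightarrow> mem z u2"
    using union_bound by blast
  have "mem a u2 \<and> mem b u2" if "mem (kpair a b) x" for a b
  proof -
    have "mem (St (csingle a)) (kpair a b)" "mem (St (cinsert a (csingle b))) (kpair a b)"
      by (simp_all add: mem_kpair)
    moreover have "mem a (St (csingle a))" "mem b (St (cinsert a (csingle b)))"
      by simp_all
    ultimately show ?thesis
      using that u1(2) u2(2) by blast
  qed
  with u2(1) show ?thesis
    by blast
qed

end

section \<open>Recursion on names inside M\<close>

definition tabulates :: "('a hc \<Rightarrow> 'a hc) \<Rightarrow> 'a hc \<Rightarrow> 'a hc \<Rightarrow> bool" where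
  "tabulates T x g \<longleftrightarrow> (\<forall>z v. in_dom z x \<longrightarrow> (mem (kpair z v) g \<longleftrightarrow> v = T z))"

locale ctm_recursion = ctm +
  fixes T :: "'a hc \<Rightarrow> 'a hc" and H :: "'a hc \<Rightarrow> 'a hc \<Rightarrow> 'a hc \<Rightarrow> bool"
  assumes definable_H: "definable M (\<lambda>e. H (e 0) (e 1) (e 2))"
    and H_iff: "\<lbrakk>x \<in> M; g \<in> M; v \<in> M; tabulates T x g\<rbrakk> \<Longrightarrow> H x g v \<longleftrightarrow> v = T x"
    and step_in_M: "\<lbrakk>x \<in> M; g \<in> M; tabulates T x g\<rbrakk> \<Longrightarrow> T x \<in> M"
begin

text \<open>Approximations are set-sized pieces of the graph of T, closed under \<open>in_dom\<close>; they are
  defined through H so that they are definable over M.\<close>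

definition approximation :: "'a hc \<Rightarrow> bool" where
  "approximation g \<longleftrightarrow> g \<in> M \<and> \<not> is_ur g \<and>
     (\<forall>k. mem k g \<longrightarrow> (\<exists>w v. k = kpair w v \<and> H w g v \<and> (\<forall>z. in_dom z w \<longrightarrow> in_dom z g)))"

lemma approximation_graph:
  assumes "approximation g" "mem (kpair w v) g"
  shows "v = T w"
  using assms(2)
proof (induction w arbitrary: v rule: wf_induct[OF wf_memrel_trancl])
  case (1 w)
  have "g \<in> M" "H w g v" and dom: "\<And>z. in_dom z w \<Longrightarrow> in_dom z g"
    using assms(1) 1(2) unfolding approximation_def by auto
  moreover have "w \<in> M" "v \<in> M"
    using mem_kpair_in_M[OF \<open>g \<in> M\<close> 1(2)] by simp_all
  moreover have "tabulates T w g"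
    unfolding tabulates_def
  proof (intro allI impI)
    fix z v' assume "in_dom z w"
    then have "\<And>v''. mem (kpair z v'') g \<Longrightarrow> v'' = T z" and "in_dom z g"
      using 1(1) in_dom_memrel_trancl dom by blast+
    then show "mem (kpair z v') g \<longleftrightarrow> v' = T z"
      unfolding in_dom_def by blast
  qed
  ultimately show ?case
    using H_iff by blast
qed

lemma approximation_iff:
  "approximation g \<longleftrightarrow> g \<in> M \<and> \<not> is_ur g \<and> (\<forall>k. mem k g \<longrightarrow> (\<exists>w. k = kpair w (T w))) \<and>
     (\<forall>w z. in_dom w g \<longrightarrow> in_dom z w \<longrightarrow> in_dom z g)"
proof
  assume g: "approximation g"
  then show "g \<in> M \<and> \<not> is_ur g \<and> (\<forall>k. mem k g \<longrightarrow> (\<exists>w. k = kpair w (T w))) \<and>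
     (\<forall>w z. in_dom w g \<longrightarrow> in_dom z w \<longrightarrow> in_dom z g)"
    using approximation_graph[OF g] unfolding approximation_def in_dom_def by (metis kpair_inject)
next
  assume g: "g \<in> M \<and> \<not> is_ur g \<and> (\<forall>k. mem k g \<longrightarrow> (\<exists>w. k = kpair w (T w))) \<and>
     (\<forall>w z. in_dom w g \<longrightarrow> in_dom z w \<longrightarrow> in_dom z g)"
  have "H w g (T w)" if w: "mem (kpair w (T w)) g" for w
  proof -
    have "tabulates T w g"
      using g w unfolding tabulates_def in_dom_def by (metis kpair_inject)
    moreover have "w \<in> M" "T w \<in> M"
      using mem_kpair_in_M g w by blast+
    ultimately show ?thesis
      using H_iff g by blast
  qed
  with g show "approximation g"
    unfolding approximation_def in_dom_def by metis
qed

lemma approximation_closed: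
  "approximation g \<Longrightarrow> in_dom w g \<Longrightarrow> in_dom z w \<Longrightarrow> mem (kpair z (T z)) g"
  unfolding approximation_iff in_dom_def by (metis kpair_inject)

lemma definable_approximation: "definable M (\<lambda>e. approximation (e i))"
proof -
  have "definable M (\<lambda>e. \<not> is_ur (e i) \<and> (\<forall>k\<in>M. mem k (e i) \<longrightarrow> (\<exists>w\<in>M. \<exists>v\<in>M.
      k = kpair w v \<and> H w (e i) v \<and> (\<forall>z\<in>M. in_dom z w \<longrightarrow> in_dom z (e i)))))"
    by (intro definable_intros definable_in_dom definable_rename3[OF definable_H])
  then show ?thesis
  proof (rule definable_cong)
    fix e :: "nat \<Rightarrow> 'a hc"
    assume "\<forall>n. e n \<in> M"
    then have g: "e i \<in> M"
      by blast
    have k: "k \<in> M" if "mem k (e i)" for k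
      using transitive[OF g that] .
    have wv: "w \<in> M \<and> v \<in> M" if "mem (kpair w v) (e i)" for w v
      using mem_kpair_in_M[OF g that] by simp
    have z: "z \<in> M" if "mem (kpair w v) (e i)" "in_dom z w" for w v z
      using that wv mem_kpair_in_M(1) unfolding in_dom_def by blast
    show "(\<not> is_ur (e i) \<and> (\<forall>k\<in>M. mem k (e i) \<longrightarrow> (\<exists>w\<in>M. \<exists>v\<in>M.
        k = kpair w v \<and> H w (e i) v \<and> (\<forall>z\<in>M. in_dom z w \<longrightarrow> in_dom z (e i))))) \<longleftrightarrow> approximation (e i)"
      unfolding approximation_def using g k wv z by blast
  qed
qed

text \<open>The least approximation containing z is unique, so Replacement can collect them.\<close>

definition minimal_approximation :: "'a hc \<Rightarrow> 'a hc \<Rightarrow> bool" where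
  "minimal_approximation z g \<longleftrightarrow> approximation g \<and> in_dom z g \<and>
     (\<forall>g'. approximation g' \<and> in_dom z g' \<longrightarrow> (\<forall>k. mem k g \<longrightarrow> mem k g'))"

lemma definable_minimal_approximation: "definable M (\<lambda>e. minimal_approximation (e i) (e j))"
proof -
  have "definable M (\<lambda>e. approximation (e j) \<and> in_dom (e i) (e j) \<and>
      (\<forall>g'\<in>M. approximation g' \<and> in_dom (e i) g' \<longrightarrow> (\<forall>k\<in>M. mem k (e j) \<longrightarrow> mem k g')))"
    by (intro definable_intros definable_in_dom definable_approximation)
  then show ?thesis
  proof (rule definable_cong)
    fix e :: "nat \<Rightarrow> 'a hc"
    assume "\<forall>n. e n \<in> M"
    then have "\<And>k. mem k (e j) \<Longrightarrow> k \<in> M"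
      using transitive by blast
    moreover have "\<And>g'. approximation g' \<Longrightarrow> g' \<in> M"
      unfolding approximation_def by blast
    ultimately show "(approximation (e j) \<and> in_dom (e i) (e j) \<and>
        (\<forall>g'\<in>M. approximation g' \<and> in_dom (e i) g' \<longrightarrow> (\<forall>k\<in>M. mem k (e j) \<longrightarrow> mem k g')))
        \<longleftrightarrow> minimal_approximation (e i) (e j)"
      unfolding minimal_approximation_def by blast
  qed
qed

lemma minimal_approximation_unique:
  assumes "minimal_approximation z g1" "minimal_approximation z g2"
  shows "g1 = g2"
proof (rule hc_eqI)
  show "\<not> is_ur g1" "\<not> is_ur g2"
    using assms unfolding minimal_approximation_def approximation_def by blast+
  show "mem k g1 \<longleftrightarrow> mem k g2" for k
    using assms unfolding minimal_approximation_def by blast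
qed

lemma minimal_approximation_exists:
  assumes g0: "approximation g0" "in_dom z g0"
  shows "\<exists>m. minimal_approximation z m"
proof -
  have "g0 \<in> M" "z \<in> M"
    using g0 mem_kpair_in_M unfolding approximation_def in_dom_def by blast+
  define Q where "Q k \<longleftrightarrow> (\<forall>g'\<in>M. approximation g' \<and> in_dom z g' \<longrightarrow> mem k g')" for k
  have "definable M (\<lambda>e. \<forall>g'\<in>M. approximation g' \<and> in_dom (e 0) g' \<longrightarrow> mem (e 1) g')"
    by (intro definable_intros definable_in_dom definable_approximation)
  from definable_params[OF this, where cs="[z]"] \<open>z \<in> M\<close>
  have "definable M (\<lambda>e. Q (e 0))"
    unfolding Q_def by simp
  then obtain m where m: "m \<in> M" "\<not> is_ur m" "\<And>k. mem k m \<longleftrightarrow> mem k g0 \<and> Q k"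
    using separation[OF \<open>g0 \<in> M\<close>] by blast
  have Q_iff: "Q k \<longleftrightarrow> (\<forall>g'. approximation g' \<and> in_dom z g' \<longrightarrow> mem k g')" for k
    unfolding Q_def approximation_def by blast
  have in_all: "mem (kpair u (T u)) g'"
    if "in_dom w m" "in_dom u w" "approximation g'" "in_dom z g'" for w u g'
    using that m(3) Q_iff approximation_closed unfolding in_dom_def by blast
  have "approximation m"
    unfolding approximation_iff
  proof (intro conjI allI impI)
    show "m \<in> M" "\<not> is_ur m"
      using m by simp_all
    show "\<exists>w. k = kpair w (T w)" if "mem k m" for k
      using that g0(1) m(3) unfolding approximation_iff by blast
    show "in_dom u m" if "in_dom w m" "in_dom u w" for w u
      using in_all[OF that] in_all[OF that g0] m(3) Q_iff unfolding in_dom_def by blast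
  qed
  moreover have "mem (kpair z (T z)) g'" if "approximation g'" "in_dom z g'" for g'
    using that approximation_graph unfolding in_dom_def by blast
  then have "in_dom z m"
    using g0 m(3) Q_iff unfolding in_dom_def by blast
  ultimately show ?thesis
    using m(3) Q_iff unfolding minimal_approximation_def by blast
qed

lemma union_of_approximations:
  assumes "Y \<in> M"
  shows "\<exists>U. approximation U \<and> (\<forall>g k. mem g Y \<longrightarrow> approximation g \<longrightarrow> mem k g \<longrightarrow> mem k U)"
proof -
  obtain u where u: "u \<in> M" "\<forall>g k. mem g Y \<longrightarrow> mem k g \<longrightarrow> mem k u"
    using union_bound[OF assms] by blast
  define Q where "Q k \<longleftrightarrow> (\<exists>g\<in>M. mem g Y \<and> approximation g \<and> mem k g)" for k
  have "definable M (\<lambda>e. \<exists>g\<in>M. mem g (e 0) \<and> approximation g \<and> mem (e 1) g)"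
    by (intro definable_intros definable_approximation)
  from definable_params[OF this, where cs="[Y]"] assms
  have "definable M (\<lambda>e. Q (e 0))"
    unfolding Q_def by simp
  moreover have "mem k u" if "Q k" for k
    using that u(2) unfolding Q_def by blast
  ultimately obtain U where U: "U \<in> M" "\<not> is_ur U" "\<And>k. mem k U \<longleftrightarrow> Q k"
    using separation_subset[OF u(1), of Q] by blast
  have Q_iff: "Q k \<longleftrightarrow> (\<exists>g. mem g Y \<and> approximation g \<and> mem k g)" for k
    unfolding Q_def approximation_def by blast
  have "approximation U"
    unfolding approximation_iff
  proof (intro conjI allI impI)
    show "U \<in> M" "\<not> is_ur U"
      using U by simp_all
    show "\<exists>w. k = kpair w (T w)" if "mem k U" for k
      using that U(3) Q_iff unfolding approximation_iff by blast
    show "in_dom z U" if "in_dom w U" "in_dom z w" for w z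
      using that U(3) Q_iff approximation_closed unfolding in_dom_def by blast
  qed
  then show ?thesis
    using U(3) Q_iff by blast
qed

lemma approximation_insert:
  assumes U: "approximation U" and x: "x \<in> M" and dom: "\<And>z. in_dom z x \<Longrightarrow> in_dom z U"
  shows "\<exists>g. approximation g \<and> in_dom x g"
proof -
  have "tabulates T x U"
    using U dom approximation_graph unfolding tabulates_def in_dom_def by blast
  then have "T x \<in> M"
    using step_in_M x U unfolding approximation_def by blast
  define c where "c = kpair x (T x)"
  have "c \<in> M"
    unfolding c_def using kpair_in_M x \<open>T x \<in> M\<close> by blast
  obtain w1 where w1: "w1 \<in> M" "mem c w1"
    using pairing[OF \<open>c \<in> M\<close> \<open>c \<in> M\<close>] by blast
  obtain w where w: "w \<in> M" "\<forall>k. mem k U \<or> mem k w1 \<longrightarrow> mem k w"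
    using union2_bound[OF _ w1(1)] U unfolding approximation_def by blast
  have "definable M (\<lambda>e. mem (e 2) (e 0) \<or> e 2 = e 1)"
    by (intro definable_intros)
  from definable_params[OF this, where cs="[U, c]"] U \<open>c \<in> M\<close>
  have "definable M (\<lambda>e. mem (e 0) U \<or> e 0 = c)"
    unfolding approximation_def by simp
  then obtain g where g: "g \<in> M" "\<not> is_ur g" "\<And>k. mem k g \<longleftrightarrow> mem k U \<or> k = c"
    using separation_subset[OF w(1), of "\<lambda>k. mem k U \<or> k = c"] w(2) w1(2) by blast
  have "approximation g"
    unfolding approximation_iff
  proof (intro conjI allI impI)
    show "g \<in> M" "\<not> is_ur g"
      using g by simp_all
    show "\<exists>w. k = kpair w (T w)" if "mem k g" for k
      using that g(3) U unfolding approximation_iff c_def by blast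
    show "in_dom z g" if "in_dom w' g" "in_dom z w'" for w' z
      using that g(3) U dom unfolding approximation_iff in_dom_def c_def by (metis kpair_inject)
  qed
  moreover have "in_dom x g"
    using g(3) unfolding in_dom_def c_def by blast
  ultimately show ?thesis
    by blast
qed

lemma approximation_exists: "x \<in> M \<Longrightarrow> \<exists>g. approximation g \<and> in_dom x g"
proof (induction x rule: wf_induct[OF wf_memrel_trancl])
  case (1 x)
  obtain s where s: "s \<in> M" "\<forall>a b. mem (kpair a b) x \<longrightarrow> mem a s \<and> mem b s"
    using kpair_components_bound[OF 1(2)] by blast
  have "definable M (\<lambda>e. in_dom (e 1) (e 0))"
    by (rule definable_in_dom)
  from definable_params[OF this, where cs="[x]"] 1(2)
  have "definable M (\<lambda>e. in_dom (e 0) x)"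
    by simp
  then obtain D where D: "D \<in> M" "\<And>z. mem z D \<longleftrightarrow> in_dom z x"
    using separation_subset[OF s(1), of "\<lambda>z. in_dom z x"] s(2) unfolding in_dom_def by blast
  have "\<exists>!g. g \<in> M \<and> minimal_approximation z g" if "mem z D" for z
  proof -
    have "in_dom z x" "z \<in> M"
      using that D transitive by blast+
    then obtain g where "approximation g" "in_dom z g"
      using 1(1) in_dom_memrel_trancl by blast
    then obtain m where m: "minimal_approximation z m"
      using minimal_approximation_exists by blast
    then have "m \<in> M"
      unfolding minimal_approximation_def approximation_def by blast
    with m show ?thesis
      using minimal_approximation_unique by (intro ex1I[of _ m]) blast+
  qed
  then obtain Y where Y: "Y \<in> M" "\<forall>z. mem z D \<longrightarrow> (\<exists>g. mem g Y \<and> minimal_approximation z g)"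
    using replacement[OF definable_minimal_approximation[of 0 1] D(1)] by blast
  obtain U where U: "approximation U" "\<forall>g k. mem g Y \<longrightarrow> approximation g \<longrightarrow> mem k g \<longrightarrow> mem k U"
    using union_of_approximations[OF Y(1)] by blast
  have "in_dom z U" if "in_dom z x" for z
    using that D(2) Y(2) U(2) unfolding minimal_approximation_def in_dom_def by blast
  then show ?case
    using approximation_insert[OF U(1) 1(2)] by blast
qed

theorem recursion_in_M: "x \<in> M \<Longrightarrow> T x \<in> M"
  using approximation_exists approximation_graph mem_kpair_in_M unfolding approximation_def in_dom_def
  by metis

end

context ctm
begin

lemma hset_eq_iff:
  assumes "v \<in> M" "countable S" "S \<subseteq> M" "\<And>k. k \<in> M \<Longrightarrow> \<Phi> k \<longleftrightarrow> k \<in> S"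
  shows "(\<not> is_ur v \<and> (\<forall>k\<in>M. mem k v \<longleftrightarrow> \<Phi> k)) \<longleftrightarrow> v = hset S"
proof
  assume v: "\<not> is_ur v \<and> (\<forall>k\<in>M. mem k v \<longleftrightarrow> \<Phi> k)"
  show "v = hset S"
  proof (rule hc_eqI)
    fix k
    have "mem k v \<longleftrightarrow> k \<in> M \<and> \<Phi> k"
      using v transitive[OF assms(1)] by blast
    also have "\<dots> \<longleftrightarrow> mem k (hset S)"
      using assms(3,4) mem_hset[OF assms(2)] by blast
    finally show "mem k v \<longleftrightarrow> mem k (hset S)" .
  qed (simp_all add: v)
qed (use assms mem_hset in auto)

lemma hset_in_M:
  assumes "C \<in> M" "countable S" "\<And>k. k \<in> S \<Longrightarrow> mem k C"
    and "definable M (\<lambda>e. \<Phi> (e 0))" "\<And>k. k \<in> M \<Longrightarrow> \<Phi> k \<longleftrightarrow> k \<in> S"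
  shows "hset S \<in> M"
proof -
  obtain y where y: "y \<in> M" "\<not> is_ur y" "\<And>k. mem k y \<longleftrightarrow> mem k C \<and> \<Phi> k"
    using separation[OF assms(1,4)] by blast
  have "S \<subseteq> M"
    using assms(1,3) transitive by blast
  moreover have "\<forall>k\<in>M. mem k y \<longleftrightarrow> \<Phi> k"
    using y(3) assms(3,5) by blast
  ultimately have "y = hset S"
    using hset_eq_iff[OF y(1) assms(2) _ assms(5)] y(2) by blast
  with y(1) show ?thesis
    by simp
qed

lemma hset_recursion_in_M:
  fixes T :: "'a hc \<Rightarrow> 'a hc" and S :: "'a hc \<Rightarrow> 'a hc set" and \<Phi> :: "'a hc \<Rightarrow> 'a hc \<Rightarrow> 'a hc \<Rightarrow> bool"
  assumes T_eq: "\<And>x. T x = hset (S x)"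
    and countable_S: "\<And>x. countable (S x)"
    and definable_\<Phi>: "definable M (\<lambda>e. \<Phi> (e 0) (e 1) (e 2))"
    and \<Phi>_iff: "\<And>x g k. \<lbrakk>x \<in> M; g \<in> M; k \<in> M; tabulates T x g\<rbrakk> \<Longrightarrow> \<Phi> x g k \<longleftrightarrow> k \<in> S x"
    and S_bounded: "\<And>x g. \<lbrakk>x \<in> M; g \<in> M; tabulates T x g\<rbrakk> \<Longrightarrow> \<exists>C\<in>M. \<forall>k\<in>S x. mem k C"
    and "x \<in> M"
  shows "T x \<in> M"
proof -
  interpret ctm_recursion M T "\<lambda>x g v. \<not> is_ur v \<and> (\<forall>k\<in>M. mem k v \<longleftrightarrow> \<Phi> x g k)"
  proof unfold_locales
    show "definable M (\<lambda>e. \<not> is_ur (e 2) \<and> (\<forall>k\<in>M. mem k (e 2) \<longleftrightarrow> \<Phi> (e 0) (e 1) k))"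
      by (intro definable_intros definable_rename3[OF definable_\<Phi>])
  next
    fix x g v
    assume x: "x \<in> M" "g \<in> M" "v \<in> M" "tabulates T x g"
    then have "S x \<subseteq> M"
      using S_bounded transitive by blast
    then show "(\<not> is_ur v \<and> (\<forall>k\<in>M. mem k v \<longleftrightarrow> \<Phi> x g k)) \<longleftrightarrow> v = T x"
      unfolding T_eq using hset_eq_iff[OF x(3) countable_S] \<Phi>_iff[OF x(1,2) _ x(4)] by blast
  next
    fix x g
    assume x: "x \<in> M" "g \<in> M" "tabulates T x g"
    obtain C where C: "C \<in> M" "\<forall>k\<in>S x. mem k C"
      using S_bounded[OF x] by blast
    from definable_params[OF definable_\<Phi>, where cs="[x, g]"] x
    have "definable M (\<lambda>e. \<Phi> x g (e 0))"
      by simp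
    from hset_in_M[OF C(1) countable_S _ this] show "T x \<in> M"
      unfolding T_eq using C(2) \<Phi>_iff[OF x(1,2) _ x(3)] by blast
  qed
  show ?thesis
    by (rule recursion_in_M) fact
qed

end

section \<open>From old names to new names\<close>

lemma countable_kpair_members: "countable {(a, b). mem (kpair a b) x}"
proof (rule countable_image_inj_on)
  show "countable (case_prod kpair ` {(a, b). mem (kpair a b) x})"
    by (rule countable_subset[OF _ countable_members]) auto
  show "inj_on (case_prod kpair) {(a, b). mem (kpair a b) x}"
    by (auto intro: inj_onI)
qed

definition old_to_new_pairs :: "'a hc \<Rightarrow> ('a hc \<Rightarrow> 'a hc) \<Rightarrow> 'a hc \<Rightarrow> 'a hc set" where
  "old_to_new_pairs one f \<tau> =
    (if is_ur \<tau> then {kpair \<tau> one} else {kpair (f \<sigma>) p | \<sigma> p. mem (kpair \<sigma> p) \<tau>})"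

definition old_to_new :: "'a hc \<Rightarrow> 'a hc \<Rightarrow> 'a hc" where
  "old_to_new one = wfrec (memrel\<^sup>+) (\<lambda>f \<tau>. hset (old_to_new_pairs one f \<tau>))"

lemma countable_old_to_new_pairs: "countable (old_to_new_pairs one f \<tau>)"
proof -
  have "{kpair (f \<sigma>) p | \<sigma> p. mem (kpair \<sigma> p) \<tau>} = (\<lambda>(\<sigma>, p). kpair (f \<sigma>) p) ` {(a, b). mem (kpair a b) \<tau>}"
    by auto
  moreover have "countable ((\<lambda>(\<sigma>, p). kpair (f \<sigma>) p) ` {(a, b). mem (kpair a b) \<tau>})"
    using countable_kpair_members by (rule countable_image)
  ultimately show ?thesis
    unfolding old_to_new_pairs_def by (simp only: if_split countable_insert countable_empty) simp
qed

lemma old_to_new_eq: "old_to_new one \<tau> = hset (old_to_new_pairs one (old_to_new one) \<tau>)"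
  unfolding old_to_new_def
proof (rule wfrec_memrel_trancl_unfold)
  fix f g :: "'a hc \<Rightarrow> 'a hc" and x
  assume "\<And>y. (y, x) \<in> memrel\<^sup>+ \<Longrightarrow> f y = g y"
  then have "old_to_new_pairs one f x = old_to_new_pairs one g x"
    unfolding old_to_new_pairs_def by (auto dest: kpair_fst_memrel_trancl) (metis kpair_fst_memrel_trancl)+
  then show "hset (old_to_new_pairs one f x) = hset (old_to_new_pairs one g x)"
    by simp
qed

lemma mem_old_to_new: "mem k (old_to_new one \<tau>) \<longleftrightarrow> k \<in> old_to_new_pairs one (old_to_new one) \<tau>"
  by (subst old_to_new_eq) (simp add: mem_hset countable_old_to_new_pairs)

lemma old_to_new_not_ur [simp]: "\<not> is_ur (old_to_new one \<tau>)"
  by (subst old_to_new_eq) simp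

lemma new_name_old_to_new:
  assumes "old_name P \<tau>" "mem one P"
  shows "new_name P leq (old_to_new one \<tau>)"
  using assms(1)
proof (induction rule: old_name.induct)
  case (ur \<tau>)
  then show ?case
    using assms(2) by (intro new_name.intros) (auto simp: mem_old_to_new old_to_new_pairs_def)
next
  case (st \<tau>)
  then show ?case
    by (intro new_name.intros) (auto simp: mem_old_to_new old_to_new_pairs_def)
qed

lemma val_new_old_to_new:
  assumes "old_name P \<tau>" "mem one P" "one \<in> G"
  shows "val_new P leq G (old_to_new one \<tau>) = val_old G \<tau>"
  using assms(1)
proof (induction rule: old_name.induct)
  case (ur \<tau>)
  then have "ur_valued G (old_to_new one \<tau>)"
    using assms(3) by (auto simp: ur_valued_def mem_old_to_new old_to_new_pairs_def)
  then have "val_new P leq G (old_to_new one \<tau>) = (SOME a. is_ur a \<and> (\<exists>p\<in>G. mem (kpair a p) (old_to_new one \<tau>)))"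
    by (rule val_new_ur_valued)
  also have "\<dots> = \<tau>"
    using ur assms(3) by (intro some_equality) (auto simp: mem_old_to_new old_to_new_pairs_def)
  finally show ?case
    using ur by (simp add: val_old_ur)
next
  case (st \<tau>)
  have not_ur_valued: "\<not> ur_valued G (old_to_new one \<tau>)"
    using st(1) by (auto simp: ur_valued_def mem_old_to_new old_to_new_pairs_def)
  show ?case
  proof (rule hc_eqI)
    show "\<not> is_ur (val_new P leq G (old_to_new one \<tau>))"
      using val_new_not_ur[OF old_to_new_not_ur not_ur_valued] .
    show "\<not> is_ur (val_old G \<tau>)"
      using val_old_not_ur[OF st(1)] .
    fix k
    have "mem k (val_new P leq G (old_to_new one \<tau>)) \<longleftrightarrow>
        (\<exists>\<sigma> p. mem (kpair \<sigma> p) \<tau> \<and> new_name P leq (old_to_new one \<sigma>) \<and> p \<in> G \<and>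
          k = val_new P leq G (old_to_new one \<sigma>))"
      using st(1) by (auto simp: mem_val_new[OF old_to_new_not_ur not_ur_valued] mem_old_to_new
          old_to_new_pairs_def)
    also have "\<dots> \<longleftrightarrow> (\<exists>\<sigma> p. mem (kpair \<sigma> p) \<tau> \<and> p \<in> G \<and> k = val_old G \<sigma>)"
      using st(2) new_name_old_to_new assms(2) by fastforce
    also have "\<dots> \<longleftrightarrow> mem k (val_old G \<tau>)"
      using mem_val_old[OF st(1)] by simp
    finally show "mem k (val_new P leq G (old_to_new one \<tau>)) \<longleftrightarrow> mem k (val_old G \<tau>)" .
  qed
qed

context ctm
begin

lemma definable_old_to_new_step:
  assumes "one \<in> M"
  shows "definable M (\<lambda>e. (is_ur (e 0) \<and> e 2 = kpair (e 0) one) \<or>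
    (\<not> is_ur (e 0) \<and> (\<exists>\<sigma> p t. mem (kpair \<sigma> p) (e 0) \<and> mem (kpair \<sigma> t) (e 1) \<and> e 2 = kpair t p)))"
proof -
  have "definable M (\<lambda>e. (is_ur (e 1) \<and> e 3 = kpair (e 1) (e 0)) \<or>
      (\<not> is_ur (e 1) \<and> (\<exists>\<sigma>\<in>M. \<exists>p\<in>M. \<exists>t\<in>M. mem (kpair \<sigma> p) (e 1) \<and> mem (kpair \<sigma> t) (e 2) \<and> e 3 = kpair t p)))"
    by (intro definable_intros)
  from definable_params[OF this, where cs="[one]"] assms
  have "definable M (\<lambda>e. (is_ur (e 0) \<and> e 2 = kpair (e 0) one) \<or>
      (\<not> is_ur (e 0) \<and> (\<exists>\<sigma>\<in>M. \<exists>p\<in>M. \<exists>t\<in>M. mem (kpair \<sigma> p) (e 0) \<and> mem (kpair \<sigma> t) (e 1) \<and> e 2 = kpair t p)))"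
    by simp
  then show ?thesis
    by (rule definable_cong) (use mem_kpair_in_M in blast)
qed

lemma old_to_new_pairs_bounded:
  assumes one: "one \<in> M" and x: "x \<in> M" "g \<in> M" "tabulates (old_to_new one) x g"
  shows "\<exists>C\<in>M. \<forall>k\<in>old_to_new_pairs one (old_to_new one) x. mem k C"
proof -
  obtain u1 where u1: "u1 \<in> M" "\<forall>a b. mem (kpair a b) x \<longrightarrow> mem a u1 \<and> mem b u1"
    using kpair_components_bound[OF x(1)] by blast
  obtain u2 where u2: "u2 \<in> M" "\<forall>a b. mem (kpair a b) g \<longrightarrow> mem a u2 \<and> mem b u2"
    using kpair_components_bound[OF x(2)] by blast
  obtain w0 where w0: "w0 \<in> M" "mem x w0" "mem one w0"
    using pairing[OF x(1) one] by blast
  obtain w1 where w1: "w1 \<in> M" "\<forall>k. mem k w0 \<or> mem k u1 \<longrightarrow> mem k w1"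
    using union2_bound[OF w0(1) u1(1)] by blast
  obtain W where W: "W \<in> M" "\<forall>k. mem k w1 \<or> mem k u2 \<longrightarrow> mem k W"
    using union2_bound[OF w1(1) u2(1)] by blast
  obtain C where C: "C \<in> M" "\<forall>a b. mem a W \<longrightarrow> mem b W \<longrightarrow> mem (kpair a b) C"
    using kpairs_bound[OF W(1)] by blast
  have "mem k C" if k: "k \<in> old_to_new_pairs one (old_to_new one) x" for k
  proof (cases "is_ur x")
    case True
    then have "k = kpair x one"
      using k unfolding old_to_new_pairs_def by simp
    then show ?thesis
      using w0 w1(2) W(2) C(2) by blast
  next
    case False
    then obtain \<sigma> p where \<sigma>: "mem (kpair \<sigma> p) x" and k_eq: "k = kpair (old_to_new one \<sigma>) p"
      using k unfolding old_to_new_pairs_def by auto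
    then have "mem (kpair \<sigma> (old_to_new one \<sigma>)) g"
      using x(3) unfolding tabulates_def in_dom_def by blast
    then have "mem (old_to_new one \<sigma>) W"
      using u2(2) W(2) by blast
    moreover have "mem p W"
      using \<sigma> u1(2) w1(2) W(2) by blast
    ultimately show ?thesis
      using C(2) k_eq by blast
  qed
  with C(1) show ?thesis
    by blast
qed

lemma old_to_new_in_M:
  assumes "one \<in> M" "\<tau> \<in> M"
  shows "old_to_new one \<tau> \<in> M"
proof (rule hset_recursion_in_M[OF old_to_new_eq countable_old_to_new_pairs
      definable_old_to_new_step[OF assms(1)] _ old_to_new_pairs_bounded[OF assms(1)] assms(2)])
  fix x g k
  assume "tabulates (old_to_new one) x g"
  then have "mem (kpair \<sigma> t) g \<longleftrightarrow> t = old_to_new one \<sigma>" if "mem (kpair \<sigma> p) x" for \<sigma> p t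
    using that unfolding tabulates_def in_dom_def by blast
  then show "(is_ur x \<and> k = kpair x one) \<or>
      (\<not> is_ur x \<and> (\<exists>\<sigma> p t. mem (kpair \<sigma> p) x \<and> mem (kpair \<sigma> t) g \<and> k = kpair t p))
      \<longleftrightarrow> k \<in> old_to_new_pairs one (old_to_new one) x"
    unfolding old_to_new_pairs_def by auto blast
qed

end

section \<open>From new names to old names\<close>

definition incompatible_with_ur_entries :: "'a hc \<Rightarrow> 'a hc \<Rightarrow> 'a hc \<Rightarrow> 'a hc \<Rightarrow> bool" where
  "incompatible_with_ur_entries P leq r y \<longleftrightarrow>
     (\<forall>b q. mem (kpair b q) y \<and> is_ur b \<longrightarrow> \<not> compatible P leq r q)"

definition new_to_old_pairs :: "'a hc \<Rightarrow> 'a hc \<Rightarrow> ('a hc \<Rightarrow> 'a hc) \<Rightarrow> 'a hc \<Rightarrow> 'a hc set" where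
  "new_to_old_pairs P leq f x =
     {kpair b r | y q b q' r. mem (kpair y q) x \<and> mem (kpair b q') y \<and> is_ur b \<and>
        mem r P \<and> le leq r q \<and> le leq r q'} \<union>
     {kpair (f y) r | y q r. mem (kpair y q) x \<and> \<not> is_ur y \<and>
        mem r P \<and> le leq r q \<and> incompatible_with_ur_entries P leq r y}"

definition new_to_old :: "'a hc \<Rightarrow> 'a hc \<Rightarrow> 'a hc \<Rightarrow> 'a hc" where
  "new_to_old P leq = wfrec (memrel\<^sup>+) (\<lambda>f x. hset (new_to_old_pairs P leq f x))"

lemma countable_new_to_old_pairs: "countable (new_to_old_pairs P leq f x)"
proof (rule countable_subset)
  let ?A = "(\<lambda>(b, r). kpair b r) ` ((\<Union>y\<in>{y. in_dom y x}. {b. in_dom b y}) \<times> {r. mem r P})"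
  let ?B = "(\<lambda>(y, r). kpair (f y) r) ` ({y. in_dom y x} \<times> {r. mem r P})"
  show "new_to_old_pairs P leq f x \<subseteq> ?A \<union> ?B"
  proof
    fix k assume "k \<in> new_to_old_pairs P leq f x"
    then consider (ur) y q b q' r where "mem (kpair y q) x" "mem (kpair b q') y" "mem r P" "k = kpair b r"
      | (set) y q r where "mem (kpair y q) x" "mem r P" "k = kpair (f y) r"
      unfolding new_to_old_pairs_def by blast
    then show "k \<in> ?A \<union> ?B"
    proof cases
      case ur
      then have "(b, r) \<in> (\<Union>y\<in>{y. in_dom y x}. {b. in_dom b y}) \<times> {r. mem r P}"
        unfolding in_dom_def by blast
      then show ?thesis
        using ur(4) by (intro UnI1 image_eqI[where x="(b, r)"]) simp_all
    next
      case set
      then have "(y, r) \<in> {y. in_dom y x} \<times> {r. mem r P}"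
        unfolding in_dom_def by blast
      then show ?thesis
        using set(3) by (intro UnI2 image_eqI[where x="(y, r)"]) simp_all
    qed
  qed
  show "countable (?A \<union> ?B)"
    by (intro countable_Un countable_image countable_SIGMA countable_UN countable_in_dom countable_members)
qed

lemma new_to_old_eq: "new_to_old P leq x = hset (new_to_old_pairs P leq (new_to_old P leq) x)"
  unfolding new_to_old_def
proof (rule wfrec_memrel_trancl_unfold)
  fix f g :: "'a hc \<Rightarrow> 'a hc" and x
  assume "\<And>y. (y, x) \<in> memrel\<^sup>+ \<Longrightarrow> f y = g y"
  then have "f y = g y" if "mem (kpair y q) x" for y q
    using that kpair_fst_memrel_trancl by blast
  then have "(\<exists>y q r. k = kpair (f y) r \<and> mem (kpair y q) x \<and> R y q r) \<longleftrightarrow>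
      (\<exists>y q r. k = kpair (g y) r \<and> mem (kpair y q) x \<and> R y q r)" for k R
    by metis
  then have "new_to_old_pairs P leq f x = new_to_old_pairs P leq g x"
    unfolding new_to_old_pairs_def by simp
  then show "hset (new_to_old_pairs P leq f x) = hset (new_to_old_pairs P leq g x)"
    by simp
qed

lemma mem_new_to_old: "mem k (new_to_old P leq x) \<longleftrightarrow> k \<in> new_to_old_pairs P leq (new_to_old P leq) x"
  by (subst new_to_old_eq) (simp add: mem_hset countable_new_to_old_pairs)

lemma new_to_old_not_ur [simp]: "\<not> is_ur (new_to_old P leq x)"
  by (subst new_to_old_eq) simp

lemma old_name_new_to_old: "old_name P (new_to_old P leq x)"
proof (induction x rule: wf_induct[OF wf_memrel_trancl])
  case (1 x)
  show ?case
  proof (rule old_name.st)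
    show "\<forall>z. mem z (new_to_old P leq x) \<longrightarrow> (\<exists>\<sigma> p. z = kpair \<sigma> p \<and> old_name P \<sigma> \<and> mem p P)"
      using 1 kpair_fst_memrel_trancl
      unfolding mem_new_to_old new_to_old_pairs_def by (blast intro: old_name.ur)
  qed simp
qed

lemma kpair_mem_new_to_old:
  "mem (kpair \<sigma> r) (new_to_old P leq x) \<longleftrightarrow>
    (\<exists>y q q'. mem (kpair y q) x \<and> mem (kpair \<sigma> q') y \<and> is_ur \<sigma> \<and> mem r P \<and> le leq r q \<and> le leq r q') \<or>
    (\<exists>y q. mem (kpair y q) x \<and> \<not> is_ur y \<and> \<sigma> = new_to_old P leq y \<and>
       mem r P \<and> le leq r q \<and> incompatible_with_ur_entries P leq r y)"
  unfolding mem_new_to_old new_to_old_pairs_def by auto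

context ctm
begin

lemma definable_mem_const: "c \<in> M \<Longrightarrow> definable M (\<lambda>e. mem (e i) c)"
  using definable_params[OF definable_mem[of "Suc i" 0], where cs="[c]"] by simp

lemma definable_le: "leq \<in> M \<Longrightarrow> definable M (\<lambda>e. le leq (e i) (e j))"
  using definable_params[OF definable_mem_kpair[of "Suc i" "Suc j" 0], where cs="[leq]"]
  by (simp add: le_def)

lemma definable_compatible:
  assumes "P \<in> M" "leq \<in> M"
  shows "definable M (\<lambda>e. compatible P leq (e i) (e j))"
proof -
  have "definable M (\<lambda>e. \<exists>r\<in>M. mem r P \<and> le leq r (e i) \<and> le leq r (e j))"
    by (intro definable_intros definable_mem_const[OF assms(1)] definable_le[OF assms(2)])
  then show ?thesis
    by (rule definable_cong) (use assms(1) transitive in \<open>auto simp: compatible_def\<close>)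
qed

lemma definable_incompatible_with_ur_entries:
  assumes "P \<in> M" "leq \<in> M"
  shows "definable M (\<lambda>e. incompatible_with_ur_entries P leq (e i) (e j))"
proof -
  have "definable M (\<lambda>e. \<forall>b\<in>M. \<forall>q\<in>M. mem (kpair b q) (e j) \<and> is_ur b \<longrightarrow> \<not> compatible P leq (e i) q)"
    by (intro definable_intros definable_compatible[OF assms])
  then show ?thesis
  proof (rule definable_cong)
    fix e :: "nat \<Rightarrow> 'a hc"
    assume "\<forall>n. e n \<in> M"
    then have "\<And>b q. mem (kpair b q) (e j) \<Longrightarrow> b \<in> M \<and> q \<in> M"
      using mem_kpair_in_M by blast
    then show "(\<forall>b\<in>M. \<forall>q\<in>M. mem (kpair b q) (e j) \<and> is_ur b \<longrightarrow> \<not> compatible P leq (e i) q)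
        \<longleftrightarrow> incompatible_with_ur_entries P leq (e i) (e j)"
      unfolding incompatible_with_ur_entries_def by blast
  qed
qed

lemma definable_new_to_old_step:
  assumes P: "P \<in> M" and leq: "leq \<in> M"
  shows "definable M (\<lambda>e.
    (\<exists>y q b q' r. mem (kpair y q) (e 0) \<and> mem (kpair b q') y \<and> is_ur b \<and>
       mem r P \<and> le leq r q \<and> le leq r q' \<and> e 2 = kpair b r) \<or>
    (\<exists>y q t r. mem (kpair y q) (e 0) \<and> \<not> is_ur y \<and> mem (kpair y t) (e 1) \<and>
       mem r P \<and> le leq r q \<and> incompatible_with_ur_entries P leq r y \<and> e 2 = kpair t r))"
proof -
  have "definable M (\<lambda>e.
    (\<exists>y\<in>M. \<exists>q\<in>M. \<exists>b\<in>M. \<exists>q'\<in>M. \<exists>r\<in>M. mem (kpair y q) (e 0) \<and> mem (kpair b q') y \<and> is_ur b \<and>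
       mem r P \<and> le leq r q \<and> le leq r q' \<and> e 2 = kpair b r) \<or>
    (\<exists>y\<in>M. \<exists>q\<in>M. \<exists>t\<in>M. \<exists>r\<in>M. mem (kpair y q) (e 0) \<and> \<not> is_ur y \<and> mem (kpair y t) (e 1) \<and>
       mem r P \<and> le leq r q \<and> incompatible_with_ur_entries P leq r y \<and> e 2 = kpair t r))"
    by (intro definable_intros definable_mem_const[OF P] definable_le[OF leq]
        definable_incompatible_with_ur_entries[OF P leq])
  then show ?thesis
  proof (rule definable_cong)
    fix e :: "nat \<Rightarrow> 'a hc"
    assume "\<forall>n. e n \<in> M"
    then have y: "y \<in> M \<and> q \<in> M" if "mem (kpair y q) (e 0)" for y q
      using mem_kpair_in_M that by blast
    have b: "b \<in> M \<and> q' \<in> M" if "mem (kpair y q) (e 0)" "mem (kpair b q') y" for y q b q'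
      using mem_kpair_in_M y[OF that(1)] that(2) by blast
    have t: "t \<in> M" if "mem (kpair y t) (e 1)" for y t
      using mem_kpair_in_M \<open>\<forall>n. e n \<in> M\<close> that by blast
    have r: "r \<in> M" if "mem r P" for r
      using transitive[OF P that] .
    show "((\<exists>y\<in>M. \<exists>q\<in>M. \<exists>b\<in>M. \<exists>q'\<in>M. \<exists>r\<in>M. mem (kpair y q) (e 0) \<and> mem (kpair b q') y \<and> is_ur b \<and>
       mem r P \<and> le leq r q \<and> le leq r q' \<and> e 2 = kpair b r) \<or>
      (\<exists>y\<in>M. \<exists>q\<in>M. \<exists>t\<in>M. \<exists>r\<in>M. mem (kpair y q) (e 0) \<and> \<not> is_ur y \<and> mem (kpair y t) (e 1) \<and>
       mem r P \<and> le leq r q \<and> incompatible_with_ur_entries P leq r y \<and> e 2 = kpair t r)) \<longleftrightarrow>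
      ((\<exists>y q b q' r. mem (kpair y q) (e 0) \<and> mem (kpair b q') y \<and> is_ur b \<and>
       mem r P \<and> le leq r q \<and> le leq r q' \<and> e 2 = kpair b r) \<or>
      (\<exists>y q t r. mem (kpair y q) (e 0) \<and> \<not> is_ur y \<and> mem (kpair y t) (e 1) \<and>
       mem r P \<and> le leq r q \<and> incompatible_with_ur_entries P leq r y \<and> e 2 = kpair t r))"
      using y b t r by blast
  qed
qed

lemma new_to_old_pairs_bounded:
  assumes P: "P \<in> M" and x: "x \<in> M" "g \<in> M" "tabulates (new_to_old P leq) x g"
  shows "\<exists>C\<in>M. \<forall>k\<in>new_to_old_pairs P leq (new_to_old P leq) x. mem k C"
proof -
  obtain u1 where u1: "u1 \<in> M" "\<forall>a b. mem (kpair a b) x \<longrightarrow> mem a u1 \<and> mem b u1"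
    using kpair_components_bound[OF x(1)] by blast
  obtain u2 where u2: "u2 \<in> M" "\<forall>y z. mem y u1 \<longrightarrow> mem z y \<longrightarrow> mem z u2"
    using union_bound[OF u1(1)] by blast
  obtain u3 where u3: "u3 \<in> M" "\<forall>a b. mem (kpair a b) u2 \<longrightarrow> mem a u3 \<and> mem b u3"
    using kpair_components_bound[OF u2(1)] by blast
  obtain u4 where u4: "u4 \<in> M" "\<forall>a b. mem (kpair a b) g \<longrightarrow> mem a u4 \<and> mem b u4"
    using kpair_components_bound[OF x(2)] by blast
  obtain w where w: "w \<in> M" "\<forall>k. mem k u3 \<or> mem k u4 \<longrightarrow> mem k w"
    using union2_bound[OF u3(1) u4(1)] by blast
  obtain W where W: "W \<in> M" "\<forall>k. mem k w \<or> mem k P \<longrightarrow> mem k W"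
    using union2_bound[OF w(1) P] by blast
  obtain C where C: "C \<in> M" "\<forall>a b. mem a W \<longrightarrow> mem b W \<longrightarrow> mem (kpair a b) C"
    using kpairs_bound[OF W(1)] by blast
  have "mem k C" if k: "k \<in> new_to_old_pairs P leq (new_to_old P leq) x" for k
  proof -
    consider (ur) y q b q' r where "mem (kpair y q) x" "mem (kpair b q') y" "mem r P" "k = kpair b r"
      | (set) y q r where "mem (kpair y q) x" "mem r P" "k = kpair (new_to_old P leq y) r"
      using k unfolding new_to_old_pairs_def by blast
    then show ?thesis
    proof cases
      case ur
      then have "mem b u3"
        using u1(2) u2(2) u3(2) by blast
      then show ?thesis
        using ur(3,4) w(2) W(2) C(2) by blast
    next
      case set
      then have "mem (kpair y (new_to_old P leq y)) g"
        using x(3) unfolding tabulates_def in_dom_def by blast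
      then have "mem (new_to_old P leq y) u4"
        using u4(2) by blast
      then show ?thesis
        using set(2,3) w(2) W(2) C(2) by blast
    qed
  qed
  with C(1) show ?thesis
    by blast
qed

lemma new_to_old_in_M:
  assumes "P \<in> M" "leq \<in> M" "x \<in> M"
  shows "new_to_old P leq x \<in> M"
proof (rule hset_recursion_in_M[OF new_to_old_eq countable_new_to_old_pairs
      definable_new_to_old_step[OF assms(1,2)] _ new_to_old_pairs_bounded[OF assms(1)] assms(3)])
  fix x g k
  assume tab: "tabulates (new_to_old P leq) x g"
  have g_eq: "t = new_to_old P leq y" if "mem (kpair y q) x" "mem (kpair y t) g" for y q t
    using tab that unfolding tabulates_def in_dom_def by blast
  have g_in: "mem (kpair y (new_to_old P leq y)) g" if "mem (kpair y q) x" for y q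
    using tab that unfolding tabulates_def in_dom_def by blast
  have "(\<exists>y q t r. mem (kpair y q) x \<and> \<not> is_ur y \<and> mem (kpair y t) g \<and>
       mem r P \<and> le leq r q \<and> incompatible_with_ur_entries P leq r y \<and> k = kpair t r) \<longleftrightarrow>
    (\<exists>y q r. mem (kpair y q) x \<and> \<not> is_ur y \<and>
       mem r P \<and> le leq r q \<and> incompatible_with_ur_entries P leq r y \<and> k = kpair (new_to_old P leq y) r)"
  proof
    assume "\<exists>y q t r. mem (kpair y q) x \<and> \<not> is_ur y \<and> mem (kpair y t) g \<and>
       mem r P \<and> le leq r q \<and> incompatible_with_ur_entries P leq r y \<and> k = kpair t r"
    then obtain y q t r where yq: "mem (kpair y q) x" and yt: "mem (kpair y t) g"
      and "\<not> is_ur y" "mem r P" "le leq r q" "incompatible_with_ur_entries P leq r y" "k = kpair t r"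
      by blast
    moreover have "t = new_to_old P leq y"
      using g_eq[OF yq yt] .
    ultimately show "\<exists>y q r. mem (kpair y q) x \<and> \<not> is_ur y \<and>
       mem r P \<and> le leq r q \<and> incompatible_with_ur_entries P leq r y \<and> k = kpair (new_to_old P leq y) r"
      by blast
  qed (use g_in in blast)
  then show "((\<exists>y q b q' r. mem (kpair y q) x \<and> mem (kpair b q') y \<and> is_ur b \<and>
       mem r P \<and> le leq r q \<and> le leq r q' \<and> k = kpair b r) \<or>
    (\<exists>y q t r. mem (kpair y q) x \<and> \<not> is_ur y \<and> mem (kpair y t) g \<and>
       mem r P \<and> le leq r q \<and> incompatible_with_ur_entries P leq r y \<and> k = kpair t r))
    \<longleftrightarrow> k \<in> new_to_old_pairs P leq (new_to_old P leq) x"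
    unfolding new_to_old_pairs_def by blast
qed

end

section \<open>The generic extension\<close>

locale forcing = ctm +
  fixes P leq one :: "'a hc" and G :: "'a hc set"
  assumes forcing_poset: "forcing_poset M P leq one"
    and generic: "generic_filter M P leq G"
begin

lemma P_in_M: "P \<in> M" and leq_in_M: "leq \<in> M" and one_in_M: "one \<in> M" and one_in_P: "mem one P"
  and le_refl: "mem p P \<Longrightarrow> le leq p p"
  and le_trans: "\<lbrakk>mem p P; mem q P; mem r P; le leq p q; le leq q r\<rbrakk> \<Longrightarrow> le leq p r"
  and le_one: "mem p P \<Longrightarrow> le leq p one"
  using forcing_poset unfolding forcing_poset_def by blast+

lemma le_in_P: "le leq p q \<Longrightarrow> mem p P \<and> mem q P"
  using forcing_poset unfolding forcing_poset_def le_def by (metis kpair_inject)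

lemma G_in_P: "p \<in> G \<Longrightarrow> mem p P"
  and G_upward: "\<lbrakk>p \<in> G; le leq p q\<rbrakk> \<Longrightarrow> q \<in> G"
  and G_directed: "\<lbrakk>p \<in> G; q \<in> G\<rbrakk> \<Longrightarrow> \<exists>r\<in>G. le leq r p \<and> le leq r q"
  and G_meets_dense: "\<lbrakk>D \<in> M; \<forall>d. mem d D \<longrightarrow> mem d P; dense P leq D\<rbrakk> \<Longrightarrow> \<exists>d. mem d D \<and> d \<in> G"
  and G_nonempty: "G \<noteq> {}"
  using generic le_in_P unfolding generic_filter_def by blast+

lemma one_in_G: "one \<in> G"
  using G_nonempty G_upward G_in_P le_one by blast

lemma G_compatible: "p \<in> G \<Longrightarrow> q \<in> G \<Longrightarrow> compatible P leq p q"
  unfolding compatible_def using G_directed G_in_P by blast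

lemma val_new_ur_entry:
  assumes "new_name P leq x" "is_ur a" "p \<in> G" "mem (kpair a p) x"
  shows "val_new P leq G x = a"
proof -
  have unique: "a' = a" if "is_ur a'" "p' \<in> G" "mem (kpair a' p') x" for a' p'
  proof (rule ccontr)
    assume "a' \<noteq> a"
    with assms(1) assms(4) that have "\<not> compatible P leq p' p"
      by (cases rule: new_name.cases) blast
    with that(2) assms(3) show False
      using G_compatible by blast
  qed
  have "ur_valued G x"
    using assms(2-4) unfolding ur_valued_def by blast
  then have "val_new P leq G x = (SOME a. is_ur a \<and> (\<exists>p\<in>G. mem (kpair a p) x))"
    by (rule val_new_ur_valued)
  also have "\<dots> = a"
    using assms(2-4) unique by (intro some_equality) blast+
  finally show ?thesis .
qed

lemma incompatible_with_ur_entries_le: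
  assumes "incompatible_with_ur_entries P leq d y" "le leq r d"
  shows "incompatible_with_ur_entries P leq r y"
  using assms le_trans le_in_P unfolding incompatible_with_ur_entries_def compatible_def by meson

lemma generic_incompatible_with_ur_entries:
  assumes "y \<in> M" "\<not> ur_valued G y"
  shows "\<exists>d\<in>G. incompatible_with_ur_entries P leq d y"
proof -
  define decides where
    "decides d \<longleftrightarrow> (\<exists>b q. mem (kpair b q) y \<and> is_ur b \<and> le leq d q) \<or> incompatible_with_ur_entries P leq d y"
    for d
  have "definable M (\<lambda>e. (\<exists>b\<in>M. \<exists>q\<in>M. mem (kpair b q) (e 0) \<and> is_ur b \<and> le leq (e 1) q) \<or>
      incompatible_with_ur_entries P leq (e 1) (e 0))"
    by (intro definable_intros definable_le[OF leq_in_M]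
        definable_incompatible_with_ur_entries[OF P_in_M leq_in_M])
  from definable_params[OF this, where cs="[y]"] assms(1)
  have "definable M (\<lambda>e. (\<exists>b\<in>M. \<exists>q\<in>M. mem (kpair b q) y \<and> is_ur b \<and> le leq (e 0) q) \<or>
      incompatible_with_ur_entries P leq (e 0) y)"
    by simp
  then have "definable M (\<lambda>e. decides (e 0))"
    unfolding decides_def by (rule definable_cong) (use mem_kpair_in_M[OF assms(1)] in blast)
  from separation[OF P_in_M this] obtain D where D: "D \<in> M" "\<And>d. mem d D \<longleftrightarrow> mem d P \<and> decides d"
    by blast
  have "dense P leq D"
    unfolding dense_def
  proof (intro allI impI)
    fix p assume p: "mem p P"
    show "\<exists>d. mem d D \<and> le leq d p"
    proof (cases "incompatible_with_ur_entries P leq p y")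
      case True
      then show ?thesis
        using D(2) p le_refl unfolding decides_def by blast
    next
      case False
      then obtain b q s where "mem (kpair b q) y" "is_ur b" "mem s P" "le leq s p" "le leq s q"
        unfolding incompatible_with_ur_entries_def compatible_def by blast
      then show ?thesis
        using D(2) unfolding decides_def by blast
    qed
  qed
  then obtain d where "mem d D" "d \<in> G"
    using G_meets_dense D by blast
  moreover have "\<not> (le leq d q \<and> mem (kpair b q) y \<and> is_ur b)" for b q
    using assms(2) G_upward \<open>d \<in> G\<close> unfolding ur_valued_def by blast
  ultimately show ?thesis
    using D(2) unfolding decides_def by blast
qed

lemma val_old_new_to_old_subset:
  assumes x: "new_name P leq x" "\<not> ur_valued G x"
    and IH: "\<And>y q. \<lbrakk>mem (kpair y q) x; new_name P leq y; \<not> ur_valued G y\<rbrakk> \<Longrightarrow>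
      val_old G (new_to_old P leq y) = val_new P leq G y"
    and k: "mem k (val_old G (new_to_old P leq x))"
  shows "mem k (val_new P leq G x)"
proof -
  obtain \<sigma> r where r: "mem (kpair \<sigma> r) (new_to_old P leq x)" "r \<in> G" and k_eq: "k = val_old G \<sigma>"
    using k mem_val_old[OF new_to_old_not_ur] by blast
  then consider (ur) y q b q' where "mem (kpair y q) x" "mem (kpair b q') y" "is_ur b"
      "le leq r q" "le leq r q'" "\<sigma> = b"
    | (set) y q where "mem (kpair y q) x" "\<not> is_ur y" "le leq r q"
      "incompatible_with_ur_entries P leq r y" "\<sigma> = new_to_old P leq y"
    unfolding kpair_mem_new_to_old by blast
  then have "\<exists>y q. mem (kpair y q) x \<and> new_name P leq y \<and> q \<in> G \<and> k = val_new P leq G y"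
  proof cases
    case ur
    have y: "new_name P leq y"
      using new_name_entry[OF x(1) ur(1)] not_mem_ur ur(2) by blast
    have "q \<in> G" "q' \<in> G"
      using G_upward r(2) ur(4,5) by blast+
    then have "val_new P leq G y = b"
      using val_new_ur_entry[OF y ur(3) _ ur(2)] by blast
    then show ?thesis
      using ur(1,3,6) y \<open>q \<in> G\<close> k_eq val_old_ur by metis
  next
    case set
    have y: "new_name P leq y"
      using new_name_entry[OF x(1) set(1)] set(2) by blast
    have "\<not> ur_valued G y"
      using set(4) G_compatible r(2) unfolding ur_valued_def incompatible_with_ur_entries_def by blast
    then have "val_old G \<sigma> = val_new P leq G y"
      using IH[OF set(1) y] set(5) by simp
    then show ?thesis
      using set(1,3) y G_upward r(2) k_eq by blast
  qed
  then show ?thesis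
    using mem_val_new[OF new_name_not_ur[OF x(1)] x(2)] by blast
qed

lemma val_new_subset_val_old_new_to_old:
  assumes x: "x \<in> M" "new_name P leq x" "\<not> ur_valued G x"
    and IH: "\<And>y q. \<lbrakk>mem (kpair y q) x; new_name P leq y; \<not> ur_valued G y\<rbrakk> \<Longrightarrow>
      val_old G (new_to_old P leq y) = val_new P leq G y"
    and k: "mem k (val_new P leq G x)"
  shows "mem k (val_old G (new_to_old P leq x))"
proof -
  obtain y q where y: "mem (kpair y q) x" "new_name P leq y" "q \<in> G" and k_eq: "k = val_new P leq G y"
    using k mem_val_new[OF new_name_not_ur[OF x(2)] x(3)] by blast
  have "\<exists>\<sigma> r. mem (kpair \<sigma> r) (new_to_old P leq x) \<and> r \<in> G \<and> k = val_old G \<sigma>"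
  proof (cases "ur_valued G y")
    case True
    then obtain b q' where b: "is_ur b" "q' \<in> G" "mem (kpair b q') y"
      unfolding ur_valued_def by blast
    obtain r where r: "r \<in> G" "le leq r q" "le leq r q'"
      using G_directed[OF y(3) b(2)] by blast
    then have "mem (kpair b r) (new_to_old P leq x)"
      using y(1) b G_in_P unfolding kpair_mem_new_to_old by blast
    moreover have "k = val_old G b"
      using k_eq val_new_ur_entry[OF y(2) b(1,2,3)] val_old_ur[OF b(1)] by simp
    ultimately show ?thesis
      using r(1) by blast
  next
    case False
    obtain d where d: "d \<in> G" "incompatible_with_ur_entries P leq d y"
      using generic_incompatible_with_ur_entries mem_kpair_in_M[OF x(1) y(1)] False by blast
    obtain r where r: "r \<in> G" "le leq r d" "le leq r q"
      using G_directed[OF d(1) y(3)] by blast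
    then have "incompatible_with_ur_entries P leq r y"
      using d(2) incompatible_with_ur_entries_le by blast
    then have "mem (kpair (new_to_old P leq y) r) (new_to_old P leq x)"
      using y(1) new_name_not_ur[OF y(2)] r G_in_P unfolding kpair_mem_new_to_old by blast
    moreover have "k = val_old G (new_to_old P leq y)"
      using IH[OF y(1,2) False] k_eq by simp
    ultimately show ?thesis
      using r(1) by blast
  qed
  then show ?thesis
    using mem_val_old[OF new_to_old_not_ur] by blast
qed

lemma val_old_new_to_old:
  "x \<in> M \<Longrightarrow> new_name P leq x \<Longrightarrow> \<not> ur_valued G x \<Longrightarrow>
    val_old G (new_to_old P leq x) = val_new P leq G x"
proof (induction x rule: wf_induct[OF wf_memrel_trancl])
  case (1 x)
  have IH: "val_old G (new_to_old P leq y) = val_new P leq G y"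
    if "mem (kpair y q) x" "new_name P leq y" "\<not> ur_valued G y" for y q
    using 1(1) kpair_fst_memrel_trancl[OF that(1)] mem_kpair_in_M[OF 1(2) that(1)] that(2,3) by blast
  show ?case
  proof (rule hc_eqI)
    show "\<not> is_ur (val_old G (new_to_old P leq x))"
      by (simp add: val_old_not_ur)
    show "\<not> is_ur (val_new P leq G x)"
      using val_new_not_ur[OF new_name_not_ur] 1(3,4) by blast
    show "mem k (val_old G (new_to_old P leq x)) \<longleftrightarrow> mem k (val_new P leq G x)" for k
      using val_old_new_to_old_subset[OF 1(3,4), of k] val_new_subset_val_old_new_to_old[OF 1(2-4), of k] IH
      by blast
  qed
qed

lemma ext_new_subset_ext_old: "ext_new M P leq G \<subseteq> ext_old M P G"
proof
  fix k assume "k \<in> ext_new M P leq G"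
  then obtain x where x: "x \<in> M" "new_name P leq x" and k: "k = val_new P leq G x"
    unfolding ext_new_def by blast
  show "k \<in> ext_old M P G"
  proof (cases "ur_valued G x")
    case True
    then obtain a p where a: "is_ur a" "p \<in> G" "mem (kpair a p) x"
      unfolding ur_valued_def by blast
    then have "k = val_old G a"
      using k val_new_ur_entry[OF x(2)] val_old_ur[OF a(1)] by simp
    moreover have "a \<in> M"
      using mem_kpair_in_M[OF x(1) a(3)] by simp
    ultimately show ?thesis
      using old_name.ur[OF a(1)] unfolding ext_old_def by blast
  next
    case False
    then have "k = val_old G (new_to_old P leq x)"
      using k val_old_new_to_old x by simp
    then show ?thesis
      using new_to_old_in_M[OF P_in_M leq_in_M x(1)] old_name_new_to_old unfolding ext_old_def by blast
  qed
qed

lemma ext_old_subset_ext_new: "ext_old M P G \<subseteq> ext_new M P leq G"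
proof
  fix k assume "k \<in> ext_old M P G"
  then obtain \<tau> where \<tau>: "\<tau> \<in> M" "old_name P \<tau>" and k: "k = val_old G \<tau>"
    unfolding ext_old_def by blast
  have "old_to_new one \<tau> \<in> M" "new_name P leq (old_to_new one \<tau>)"
    using old_to_new_in_M[OF one_in_M \<tau>(1)] new_name_old_to_new[OF \<tau>(2) one_in_P] by simp_all
  moreover have "k = val_new P leq G (old_to_new one \<tau>)"
    using val_new_old_to_new[OF \<tau>(2) one_in_P one_in_G] k by simp
  ultimately show "k \<in> ext_new M P leq G"
    unfolding ext_new_def by blast
qed

end

theorem mainTheorem20:
  fixes M :: "'a hc set" and P leq one :: "'a hc" and G :: "'a hc set"
  assumes "ctm_ZFU_R M"
    and "forcing_poset M P leq one"
    and "generic_filter M P leq G"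
  shows "ext_new M P leq G = ext_old M P G"
proof -
  interpret forcing M P leq one G
    by unfold_locales (fact assms)+
  show ?thesis
    using ext_new_subset_ext_old ext_old_subset_ext_new by (rule subset_antisym)
qed
end
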